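(* Let $g\in I^+$ be an element such that $N(g)=g\theta(g)$ is affine generic. If $y\in\mathrm{GL}_{2n}(E)$ satisfies $yg\theta(y)^{-1}\in ZI^+\langle\varphi_1\rangle$, then $y\in ZI\langle\varphi_1\rangle$.
   Context: $F$ is a $p$-adic field, $E/F$ unramified quadratic with conjugation $c$, $\varpi$ a uniformizer of $F$, $\bar x$ reduction mod $\mathfrak{p}_E$. In $\mathrm{GL}_{2n}(E)$: $I$ is the set of matrices in $\mathrm{GL}_{2n}(\mathcal{O}_E)$ that are upper triangular modulo $\mathfrak{p}_E$ (Iwahori subgroup); $I^+\subset I$ those with diagonal entries in $1+\mathfrak{p}_E$; $Z=E^\times$ the scalar matrices. Affine simple components of $x\in I^+$: $(\overline{x_{12}},\ldots,\overline{x_{2n-1,2n}},\overline{x_{2n,1}\varpi^{-1}})\in k_E^{2n}$; $x$ is affine generic if all are nonzero. $\varphi_1=\begin{pmatrix}0&I_{2n-1}\\\varpi&0\end{pmatrix}$. $J$ is antidiagonal with $J_{i,2n+1-i}=(-1)^{i-1}$, $\theta(g)=J\,{}^tc(g)^{-1}J^{-1}$, $N(g)=g\theta(g)$ (note $\theta$ preserves $I^+$). *)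

theory Defs
  imports "Jordan_Normal_Form.Gauss_Jordan_Elimination"
begin

text \<open>E is a field of characteristic 0 with a normalized discrete valuation v
(v is only meaningful on nonzero elements), complete, with finite residue field,
i.e. a p-adic field. c is a field automorphism of order 2 preserving v, with fixed
field F; varpi is in F and has valuation 1 in E, i.e. it is a uniformizer of F which is
also a uniformizer of E (E/F unramified quadratic).\<close>

definition vO :: "('a::field \<Rightarrow> int) \<Rightarrow> 'a \<Rightarrow> bool" where
  "vO v x \<longleftrightarrow> x = 0 \<or> v x \<ge> 0"

definition vP :: "('a::field \<Rightarrow> int) \<Rightarrow> 'a \<Rightarrow> bool" where
  "vP v x \<longleftrightarrow> x = 0 \<or> v x \<ge> 1"

definition vunit :: "('a::field \<Rightarrow> int) \<Rightarrow> 'a \<Rightarrow> bool" where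
  "vunit v x \<longleftrightarrow> x \<noteq> 0 \<and> v x = 0"

definition discrete_valuation :: "('a::field \<Rightarrow> int) \<Rightarrow> bool" where
  "discrete_valuation v \<longleftrightarrow>
     (\<forall>x y. x \<noteq> 0 \<longrightarrow> y \<noteq> 0 \<longrightarrow> v (x * y) = v x + v y) \<and>
     (\<forall>x y. x \<noteq> 0 \<longrightarrow> y \<noteq> 0 \<longrightarrow> x + y \<noteq> 0 \<longrightarrow> v (x + y) \<ge> min (v x) (v y)) \<and>
     (\<forall>k. \<exists>x. x \<noteq> 0 \<and> v x = k)"

definition val_cauchy :: "('a::field \<Rightarrow> int) \<Rightarrow> (nat \<Rightarrow> 'a) \<Rightarrow> bool" where
  "val_cauchy v s \<longleftrightarrow> (\<forall>k. \<exists>N. \<forall>m\<ge>N. \<forall>n\<ge>N. s m = s n \<or> v (s m - s n) \<ge> k)"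

definition val_converges :: "('a::field \<Rightarrow> int) \<Rightarrow> (nat \<Rightarrow> 'a) \<Rightarrow> 'a \<Rightarrow> bool" where
  "val_converges v s l \<longleftrightarrow> (\<forall>k. \<exists>N. \<forall>m\<ge>N. s m = l \<or> v (s m - l) \<ge> k)"

definition val_complete :: "('a::field \<Rightarrow> int) \<Rightarrow> bool" where
  "val_complete v \<longleftrightarrow> (\<forall>s. val_cauchy v s \<longrightarrow> (\<exists>l. val_converges v s l))"

definition finite_residue_field :: "('a::field \<Rightarrow> int) \<Rightarrow> bool" where
  "finite_residue_field v \<longleftrightarrow>
     (\<exists>R. finite R \<and> R \<subseteq> {x. vO v x} \<and> (\<forall>x. vO v x \<longrightarrow> (\<exists>r\<in>R. vP v (x - r))))"

definition p_adic_field :: "('a::field_char_0 \<Rightarrow> int) \<Rightarrow> bool" where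
  "p_adic_field v \<longleftrightarrow> discrete_valuation v \<and> val_complete v \<and> finite_residue_field v"

definition unramified_quadratic_setup ::
  "('a::field_char_0 \<Rightarrow> int) \<Rightarrow> ('a \<Rightarrow> 'a) \<Rightarrow> 'a \<Rightarrow> bool" where
  "unramified_quadratic_setup v c uf \<longleftrightarrow>
     p_adic_field v \<and>
     (\<forall>x y. c (x + y) = c x + c y) \<and> (\<forall>x y. c (x * y) = c x * c y) \<and>
     (\<forall>x. c (c x) = x) \<and> (\<exists>x. c x \<noteq> x) \<and>
     (\<forall>x. x \<noteq> 0 \<longrightarrow> v (c x) = v x) \<and>
     c uf = uf \<and> uf \<noteq> 0 \<and> v uf = 1"

section \<open>Matrices in GL_{2n}(E), indices 0-based\<close>

definition minv :: "'a::field mat \<Rightarrow> 'a mat" where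
  "minv A = the (mat_inverse A)"

definition GL :: "nat \<Rightarrow> 'a::field mat set" where
  "GL m = {A. A \<in> carrier_mat m m \<and> invertible_mat A}"

definition Iwahori :: "('a::field \<Rightarrow> int) \<Rightarrow> nat \<Rightarrow> 'a mat set" where
  "Iwahori v m = {A. A \<in> carrier_mat m m \<and>
      (\<forall>i<m. \<forall>j<m. vO v (A $$ (i, j))) \<and>
      (\<forall>i<m. \<forall>j<m. j < i \<longrightarrow> vP v (A $$ (i, j))) \<and>
      (\<forall>i<m. vunit v (A $$ (i, i)))}"

definition Iwahori_plus :: "('a::field \<Rightarrow> int) \<Rightarrow> nat \<Rightarrow> 'a mat set" where
  "Iwahori_plus v m = {A. A \<in> Iwahori v m \<and> (\<forall>i<m. vP v (A $$ (i, i) - 1))}"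

definition scalars :: "nat \<Rightarrow> 'a::field mat set" where
  "scalars m = {a \<cdot>\<^sub>m 1\<^sub>m m | a. a \<noteq> 0}"

definition phi1 :: "'a::field \<Rightarrow> nat \<Rightarrow> 'a mat" where
  "phi1 uf m = mat m m (\<lambda>(i, j). if j = i + 1 then 1
                               else if i = m - 1 \<and> j = 0 then uf else 0)"

definition cyclic_gen :: "'a::field mat \<Rightarrow> 'a mat set" where
  "cyclic_gen P = {P ^\<^sub>m k | k. True} \<union> {(minv P) ^\<^sub>m k | k. True}"

definition setprod3 :: "'a::field mat set \<Rightarrow> 'a mat set \<Rightarrow> 'a mat set \<Rightarrow> 'a mat set" where
  "setprod3 A B C = {a * b * d | a b d. a \<in> A \<and> b \<in> B \<and> d \<in> C}"

text \<open>J antidiagonal with J_{i,2n+1-i} = (-1)^{i-1} (1-based).\<close>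
definition Jmat :: "nat \<Rightarrow> 'a::field mat" where
  "Jmat m = mat m m (\<lambda>(i, j). if j = m - 1 - i then (-1) ^ i else 0)"

definition theta :: "('a::field \<Rightarrow> 'a) \<Rightarrow> nat \<Rightarrow> 'a mat \<Rightarrow> 'a mat" where
  "theta c m g = Jmat m * minv (transpose_mat (map_mat c g)) * minv (Jmat m)"

definition Nmap :: "('a::field \<Rightarrow> 'a) \<Rightarrow> nat \<Rightarrow> 'a mat \<Rightarrow> 'a mat" where
  "Nmap c m g = g * theta c m g"

definition affine_generic :: "('a::field \<Rightarrow> int) \<Rightarrow> 'a \<Rightarrow> nat \<Rightarrow> 'a mat \<Rightarrow> bool" where
  "affine_generic v uf m x \<longleftrightarrow> x \<in> Iwahori_plus v m \<and>
     (\<forall>i. i + 1 < m \<longrightarrow> \<not> vP v (x $$ (i, i + 1))) \<and>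
     \<not> vP v (x $$ (m - 1, 0) / uf)"

end

theory Submission
  imports Defs "Jordan_Normal_Form.Determinant"
begin

text \<open>Give the entry \<open>(i, j)\<close> of a \<open>2n \<times> 2n\<close> matrix the depth \<open>2n \<cdot> v(x) + j - i\<close>. The matrices
  of depth \<open>\<ge> s\<close> form the powers \<open>P\<^sup>s\<close> of the radical of the Iwahori order: \<open>I\<close> is the unit group
  of \<open>P\<^sup>0\<close>, \<open>I\<^sup>+ = 1 + P\<^sup>1\<close>, and \<open>\<phi>\<^sub>1\<close> lies in \<open>P\<^sup>1\<close> with inverse in \<open>P\<^sup>-\<^sup>1\<close>.

  Let \<open>h = y g \<theta>(y)\<inverse> = z u \<phi>\<^sub>1\<^sup>t\<close>. Computing \<open>h \<theta>(h)\<close> once as \<open>y N(g) y\<inverse>\<close> and once from the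
  factorization, using \<open>\<theta>(\<phi>\<^sub>1) = -\<phi>\<^sub>1\<inverse>\<close>, gives \<open>y N(g) = \<epsilon> W y\<close> with a unit \<open>\<epsilon>\<close> and
  \<open>W \<in> I\<^sup>+\<close>. Extracting the least depth of \<open>y\<close> writes \<open>y = \<phi>\<^sub>1\<^sup>t M\<close> with \<open>M \<in> P\<^sup>0 - P\<^sup>1\<close>, and \<open>M\<close>
  intertwines \<open>N(g)\<close> with a conjugate \<open>\<epsilon> W'\<close> of \<open>\<epsilon> W\<close>. Off the diagonal no depth is a multiple
  of \<open>2n\<close>, so some diagonal entry of \<open>M\<close> is a unit. Comparing diagonal entries in
  \<open>M N(g) = \<epsilon> W' M\<close> forces \<open>\<epsilon> \<equiv> 1\<close>; comparing the entries \<open>(i, i + 1)\<close>, where \<open>N(g) - 1\<close> has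
  the affine simple components of exact depth \<open>1\<close>, shows that \<open>M\<^sub>i\<^sub>+\<^sub>1\<^sub>,\<^sub>i\<^sub>+\<^sub>1\<close> is a unit whenever
  \<open>M\<^sub>i\<^sub>i\<close> is. Going once around the cycle gives \<open>M \<in> I\<close>, hence \<open>y = (\<phi>\<^sub>1\<^sup>t M \<phi>\<^sub>1\<^sup>-\<^sup>t) \<phi>\<^sub>1\<^sup>t \<in> I \<langle>\<phi>\<^sub>1\<rangle>\<close>.\<close>

section \<open>Matrix identities and invertibility\<close>

lemma mult_mat_entry:
  assumes "A \<in> carrier_mat n n" "B \<in> carrier_mat n n" "i < n" "j < n"
  shows "(A * B) $$ (i, j) = (\<Sum>k<n. A $$ (i, k) * B $$ (k, j))"
  using assms by (auto simp: scalar_prod_def lessThan_atLeast0 intro!: sum.cong)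

lemma mult_mat_assoc4:
  fixes A B C D :: "'a::semiring_1 mat"
  assumes "A \<in> carrier_mat n n" "B \<in> carrier_mat n n" "C \<in> carrier_mat n n" "D \<in> carrier_mat n n"
  shows "(A * B) * (C * D) = A * (B * C) * D"
  using assms by (simp add: assoc_mult_mat[of _ n n _ n _ n])

lemma mult_mat_cancel_mid:
  fixes A B C D E F :: "'a::semiring_1 mat"
  assumes "A \<in> carrier_mat n n" "B \<in> carrier_mat n n" "C \<in> carrier_mat n n"
    "D \<in> carrier_mat n n" "E \<in> carrier_mat n n" "F \<in> carrier_mat n n" and CD: "C * D = 1\<^sub>m n"
  shows "(A * B * C) * (D * E * F) = A * (B * E) * F"
proof -
  have "C * (D * (E * F)) = (C * D) * (E * F)"
    by (rule assoc_mult_mat[symmetric]) (use assms in auto)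
  also have "\<dots> = E * F" unfolding CD by (rule left_mult_one_mat[OF mult_carrier_mat[OF assms(5,6)]])
  finally show ?thesis using assms by (simp add: assoc_mult_mat[of _ n n _ n _ n])
qed

lemma smult_smult_mat: "a \<cdot>\<^sub>m (b \<cdot>\<^sub>m A) = (a * b) \<cdot>\<^sub>m (A :: 'a::semiring_0 mat)"
  by (rule eq_matI) (auto simp: mult.assoc)

lemma smult_one_mult_mat: "A \<in> carrier_mat n n \<Longrightarrow> (a \<cdot>\<^sub>m 1\<^sub>m n) * A = a \<cdot>\<^sub>m (A :: 'a::comm_ring_1 mat)"
  using mult_smult_assoc_mat[of "1\<^sub>m n" n n A n a] by simp

lemma smult_mult_smult_mat:
  "A \<in> carrier_mat n n \<Longrightarrow> B \<in> carrier_mat n n \<Longrightarrow>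
    (a \<cdot>\<^sub>m A) * (b \<cdot>\<^sub>m B) = (a * b) \<cdot>\<^sub>m (A * (B :: 'a::comm_ring_1 mat))"
  using mult_smult_assoc_mat[of A n n "b \<cdot>\<^sub>m B" n a] mult_smult_distrib[of A n n B n b]
  by (simp add: smult_smult_mat)

lemma smult_pow_mat:
  "A \<in> carrier_mat n n \<Longrightarrow> (a \<cdot>\<^sub>m A) ^\<^sub>m k = (a ^ k) \<cdot>\<^sub>m (A :: 'a::comm_ring_1 mat) ^\<^sub>m k"
proof (induction k)
  case 0 then show ?case by (auto intro!: eq_matI)
next
  case (Suc k)
  then show ?case using smult_mult_smult_mat[of "A ^\<^sub>m k" n A "a ^ k" a] by (simp add: algebra_simps)
qed

lemma pow_mat_Suc_left: "A \<in> carrier_mat n n \<Longrightarrow> A ^\<^sub>m Suc k = A * A ^\<^sub>m k"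
proof (induction k)
  case (Suc k)
  have "A ^\<^sub>m Suc (Suc k) = (A * A ^\<^sub>m k) * A" using Suc by simp
  also have "\<dots> = A * (A ^\<^sub>m k * A)" using Suc.prems by (simp add: assoc_mult_mat[of _ n n _ n _ n])
  finally show ?case by simp
qed simp

lemma minv_eqI:
  fixes X :: "'a::field mat"
  assumes X: "X \<in> carrier_mat n n" and Y: "Y \<in> carrier_mat n n" and XY: "X * Y = 1\<^sub>m n"
  shows "minv X = Y"
proof -
  have "det X \<noteq> 0" using det_mult[OF X Y] XY by auto
  from det_non_zero_imp_unit[OF X this, of "()"]
  have U: "X \<in> Units (ring_mat TYPE('a) n ())" .
  obtain B where B: "mat_inverse X = Some B"
    using mat_inverse(1)[OF X, where b="()"] U by (cases "mat_inverse X") auto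
  from mat_inverse(2)[OF X B] have BX: "B * X = 1\<^sub>m n" and Bc: "B \<in> carrier_mat n n" by auto
  have "B = (B * X) * Y" using XY Bc X Y by (simp add: assoc_mult_mat[of _ n n _ n _ n])
  then show ?thesis using B BX Y by (simp add: minv_def)
qed

lemma GL_I:
  fixes X :: "'a::field mat"
  assumes "X \<in> carrier_mat n n" "Y \<in> carrier_mat n n" "X * Y = 1\<^sub>m n"
  shows "X \<in> GL n"
  using assms mat_mult_left_right_inverse[OF assms]
  unfolding GL_def invertible_mat_def inverts_mat_def by (auto simp: square_mat.simps)

lemma GL_carrier: "X \<in> GL n \<Longrightarrow> X \<in> carrier_mat n n"
  by (simp add: GL_def)

lemma GL_minv:
  fixes X :: "'a::field mat"
  assumes "X \<in> GL n"
  shows "minv X \<in> carrier_mat n n" "X * minv X = 1\<^sub>m n" "minv X * X = 1\<^sub>m n"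
proof -
  have X: "X \<in> carrier_mat n n" and "invertible_mat X" using assms by (auto simp: GL_def)
  then obtain B where B: "X * B = 1\<^sub>m n" "B * X = 1\<^sub>m (dim_row B)"
    unfolding invertible_mat_def inverts_mat_def by auto
  have "dim_col B = n" using B(1) X by (metis index_mult_mat(3) index_one_mat(3))
  moreover have "dim_row B = n" using B(2) X by (metis index_mult_mat(3) index_one_mat(3) carrier_matD(2))
  ultimately have Bc: "B \<in> carrier_mat n n" by auto
  then have "minv X = B" using minv_eqI[OF X _ B(1)] by simp
  then show "minv X \<in> carrier_mat n n" "X * minv X = 1\<^sub>m n" "minv X * X = 1\<^sub>m n"
    using B Bc by auto
qed

lemma GL_minv_GL: "X \<in> GL n \<Longrightarrow> minv X \<in> GL n"
  using GL_minv[of X n] GL_I[of "minv X" n X] GL_carrier by blast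

lemma minv_minv: "X \<in> GL n \<Longrightarrow> minv (minv X) = X"
  using GL_minv[of X n] minv_eqI[of "minv X" n X] GL_carrier by blast

lemma
  fixes X Y :: "'a::field mat"
  assumes X: "X \<in> GL n" and Y: "Y \<in> GL n"
  shows GL_mult: "X * Y \<in> GL n" and minv_mult: "minv (X * Y) = minv Y * minv X"
proof -
  note c = GL_carrier[OF X] GL_carrier[OF Y] GL_minv[OF X] GL_minv[OF Y]
  have e: "X * Y * (minv Y * minv X) = 1\<^sub>m n"
    using c mult_mat_cancel_mid[of X n "1\<^sub>m n" Y "minv Y" "1\<^sub>m n" "minv X"] by simp
  show "X * Y \<in> GL n" by (rule GL_I[OF _ _ e]) (use c in auto)
  show "minv (X * Y) = minv Y * minv X" by (rule minv_eqI[OF _ _ e]) (use c in auto)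
qed

lemma GL_one: "(1\<^sub>m n :: 'a::field mat) \<in> GL n"
  by (rule GL_I[of _ n "1\<^sub>m n"]) auto

lemma minv_one: "minv (1\<^sub>m n :: 'a::field mat) = 1\<^sub>m n"
  by (rule minv_eqI) auto

lemma GL_pow: "X \<in> GL n \<Longrightarrow> X ^\<^sub>m k \<in> GL n"
  using GL_carrier[of X n] by (induction k) (auto simp: GL_mult GL_one)

lemma GL_smult_one: "(a::'a::field) \<noteq> 0 \<Longrightarrow> a \<cdot>\<^sub>m 1\<^sub>m n \<in> GL n"
  by (rule GL_I[of _ n "inverse a \<cdot>\<^sub>m 1\<^sub>m n"]) (auto simp: smult_one_mult_mat smult_smult_mat)

lemma minv_smult_one: "(a::'a::field) \<noteq> 0 \<Longrightarrow> minv (a \<cdot>\<^sub>m 1\<^sub>m n) = inverse a \<cdot>\<^sub>m 1\<^sub>m n"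
  by (rule minv_eqI) (auto simp: smult_one_mult_mat smult_smult_mat)

lemma GL_transpose: "X \<in> GL n \<Longrightarrow> transpose_mat X \<in> GL n"
  using GL_minv[of X n] GL_carrier[of X n] transpose_mult[of "minv X" n n X n]
  by (intro GL_I[of _ n "transpose_mat (minv X)"]) auto

lemma (in field_hom) GL_map_mat:
  assumes "X \<in> GL n"
  shows "map_mat hom X \<in> GL n" "minv (map_mat hom X) = map_mat hom (minv X)"
proof -
  note c = GL_carrier[OF assms] GL_minv[OF assms]
  have e: "map_mat hom X * map_mat hom (minv X) = 1\<^sub>m n"
    using mat_hom_mult[OF c(1,2)] c mat_hom_one by simp
  show "map_mat hom X \<in> GL n" by (rule GL_I[OF _ _ e]) (use c in auto)
  show "minv (map_mat hom X) = map_mat hom (minv X)" by (rule minv_eqI[OF _ _ e]) (use c in auto)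
qed

lemma mult_mat_conj_intertwine:
  fixes P Q M X Z :: "'a::semiring_1 mat"
  assumes c: "P \<in> carrier_mat n n" "Q \<in> carrier_mat n n" "M \<in> carrier_mat n n"
    "X \<in> carrier_mat n n" "Z \<in> carrier_mat n n"
    and QP: "Q * P = 1\<^sub>m n" and int: "P * M * X = Z * (P * M)"
  shows "M * X = (Q * Z * P) * M"
proof -
  have "Q * (P * M * X) = (Q * P) * (M * X)" using c by (simp add: assoc_mult_mat[of _ n n _ n _ n])
  then have "M * X = Q * (P * M * X)" using c QP by simp
  also have "\<dots> = (Q * Z * P) * M" unfolding int using c by (simp add: assoc_mult_mat[of _ n n _ n _ n])
  finally show ?thesis .
qed

lemma mult_minv_eq_imp_eq_mult:
  fixes X Y Z :: "'a::field mat"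
  assumes Y: "Y \<in> GL n" and X: "X \<in> carrier_mat n n" and XYZ: "X * minv Y = Z"
  shows "X = Z * Y"
proof -
  note c = GL_carrier[OF Y] GL_minv[OF Y]
  have "Z * Y = X * (minv Y * Y)" unfolding XYZ[symmetric] using c X by (simp add: assoc_mult_mat[of _ n n _ n _ n])
  then show ?thesis using c X by simp
qed

section \<open>The depth filtration of the Iwahori order\<close>

locale iwahori_filtration =
  fixes v :: "'a::field \<Rightarrow> int" and m :: nat
  assumes discrete: "discrete_valuation v" and m_pos: "0 < m"
begin

lemma v_mult: "x \<noteq> 0 \<Longrightarrow> y \<noteq> 0 \<Longrightarrow> v (x * y) = v x + v y"
  using discrete unfolding discrete_valuation_def by blast

lemma v_add: "x \<noteq> 0 \<Longrightarrow> y \<noteq> 0 \<Longrightarrow> x + y \<noteq> 0 \<Longrightarrow> min (v x) (v y) \<le> v (x + y)"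
  using discrete unfolding discrete_valuation_def by blast

lemma v_one [simp]: "v 1 = 0"
  using v_mult[of 1 1] by simp

lemma v_minus_one [simp]: "v (-1) = 0"
  using v_mult[of "-1" "-1"] by simp

lemma v_uminus [simp]: "v (- x) = v x"
  by (cases "x = 0") (use v_mult[of "-1" x] in auto)

lemma v_inverse: "x \<noteq> 0 \<Longrightarrow> v (inverse x) = - v x"
  using v_mult[of x "inverse x"] by simp

lemma v_minus_one_power [simp]: "v ((-1) ^ k) = 0"
  by (cases "even k") (simp_all add: minus_one_power_iff)

definition depth_ge :: "int \<Rightarrow> nat \<Rightarrow> nat \<Rightarrow> 'a \<Rightarrow> bool" where
  "depth_ge s i j x \<longleftrightarrow> x = 0 \<or> s \<le> int m * v x + int j - int i"

definition depth_eq :: "int \<Rightarrow> nat \<Rightarrow> nat \<Rightarrow> 'a \<Rightarrow> bool" where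
  "depth_eq s i j x \<longleftrightarrow> x \<noteq> 0 \<and> int m * v x + int j - int i = s"

lemma depth_ge_zero [simp]: "depth_ge s i j 0"
  by (simp add: depth_ge_def)

lemma depth_ge_mono: "s' \<le> s \<Longrightarrow> depth_ge s i j x \<Longrightarrow> depth_ge s' i j x"
  by (auto simp: depth_ge_def)

lemma depth_ge_add:
  assumes "depth_ge s i j x" "depth_ge s i j y"
  shows "depth_ge s i j (x + y)"
proof (cases "x = 0 \<or> y = 0 \<or> x + y = 0")
  case False
  then have "int m * min (v x) (v y) \<le> int m * v (x + y)"
    using v_add by (intro mult_left_mono) auto
  then show ?thesis using assms False unfolding depth_ge_def by (auto simp: min_def split: if_splits)
qed (use assms in auto)

lemma depth_ge_uminus: "depth_ge s i j x \<Longrightarrow> depth_ge s i j (- x)"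
  by (simp add: depth_ge_def)

lemma depth_ge_diff: "depth_ge s i j x \<Longrightarrow> depth_ge s i j y \<Longrightarrow> depth_ge s i j (x - y)"
  using depth_ge_add[of s i j x "- y"] depth_ge_uminus by simp

lemma depth_ge_minus_one_power: "depth_ge s i j x \<Longrightarrow> depth_ge s i j ((-1) ^ k * x)"
  by (cases "even k") (auto simp: minus_one_power_iff intro: depth_ge_uminus)

lemma depth_ge_mult:
  assumes "depth_ge s i k x" "depth_ge t k j y"
  shows "depth_ge (s + t) i j (x * y)"
proof (cases "x = 0 \<or> y = 0")
  case False
  then have "int m * v (x * y) = int m * v x + int m * v y" by (simp add: v_mult algebra_simps)
  then show ?thesis using assms False unfolding depth_ge_def by auto
qed auto

lemma depth_eq_mult:
  assumes "depth_eq s i k x" "depth_eq t k j y"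
  shows "depth_eq (s + t) i j (x * y)"
proof -
  have "int m * v (x * y) = int m * v x + int m * v y"
    using assms by (simp add: depth_eq_def v_mult algebra_simps)
  then show ?thesis using assms unfolding depth_eq_def by auto
qed

lemma depth_ge_sum:
  "finite K \<Longrightarrow> (\<And>k. k \<in> K \<Longrightarrow> depth_ge s i j (f k)) \<Longrightarrow> depth_ge s i j (sum f K)"
  by (induction K rule: finite_induct) (auto intro: depth_ge_add)

lemma depth_eq_iff: "depth_eq s i j x \<longleftrightarrow> depth_ge s i j x \<and> \<not> depth_ge (s + 1) i j x"
  by (auto simp: depth_eq_def depth_ge_def)

lemma depth_eq_add:
  assumes x: "depth_eq s i j x" and y: "depth_ge (s + 1) i j y"
  shows "depth_eq s i j (x + y)"
proof -
  have "\<not> depth_ge (s + 1) i j (x + y)"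
    using depth_ge_diff[of "s + 1" i j "x + y" y] x y by (auto simp: depth_eq_iff)
  moreover have "depth_ge s i j (x + y)"
    using x depth_ge_mono[OF _ y, of s] by (intro depth_ge_add) (auto simp: depth_eq_iff)
  ultimately show ?thesis by (simp add: depth_eq_iff)
qed

lemma depth_eq_zero_diag_iff: "depth_eq 0 i i x \<longleftrightarrow> vunit v x"
  using m_pos by (auto simp: depth_eq_def vunit_def)

lemma depth_ge_unit_mult: "vunit v a \<Longrightarrow> depth_ge s i j x \<Longrightarrow> depth_ge s i j (a * x)"
  using depth_ge_mult[of 0 i i a s j x] by (simp add: depth_ge_def vunit_def)

lemma depth_ge_one_diag_iff: "depth_ge 1 i i x \<longleftrightarrow> vP v x"
  using m_pos by (auto simp: depth_ge_def vP_def int_one_le_iff_zero_less zero_less_mult_iff)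

text \<open>Off the diagonal the depth is never divisible by \<open>m\<close>, so depth \<open>0\<close> implies depth \<open>1\<close>.\<close>

lemma depth_ge_one_off_diag:
  assumes "i < m" "k < m" "k \<noteq> i" "depth_ge 0 i k x"
  shows "depth_ge 1 i k x"
proof (cases "x = 0")
  case False
  consider "v x \<ge> 1" | "v x = 0" | "v x \<le> -1" by linarith
  then show ?thesis
  proof cases
    case 1
    then have "int m \<le> int m * v x" using mult_left_mono[of 1 "v x" "int m"] by simp
    then show ?thesis unfolding depth_ge_def using assms(1) by linarith
  next
    case 2
    then show ?thesis using assms by (auto simp: depth_ge_def)
  next
    case 3
    then have "int m * v x \<le> - int m" using mult_left_mono[of "v x" "-1" "int m"] by simp
    then show ?thesis using assms False unfolding depth_ge_def by linarith
  qed
qed simp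

lemma depth_eq_zero_imp_diag:
  assumes "i < m" "j < m" "depth_eq 0 i j x"
  shows "i = j"
  using depth_ge_one_off_diag[of i j x] assms by (auto simp: depth_eq_iff)

definition in_filt :: "int \<Rightarrow> 'a mat \<Rightarrow> bool" where
  "in_filt s N \<longleftrightarrow> N \<in> carrier_mat m m \<and> (\<forall>i<m. \<forall>j<m. depth_ge s i j (N $$ (i, j)))"

lemma in_filt_carrier: "in_filt s N \<Longrightarrow> N \<in> carrier_mat m m"
  by (simp add: in_filt_def)

lemma in_filt_entry: "in_filt s N \<Longrightarrow> i < m \<Longrightarrow> j < m \<Longrightarrow> depth_ge s i j (N $$ (i, j))"
  by (simp add: in_filt_def)

lemma in_filt_mono: "s' \<le> s \<Longrightarrow> in_filt s N \<Longrightarrow> in_filt s' N"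
  by (auto simp: in_filt_def intro: depth_ge_mono)

lemma in_filt_mult:
  assumes A: "in_filt s A" and B: "in_filt t B"
  shows "in_filt (s + t) (A * B)"
  unfolding in_filt_def
proof (intro conjI allI impI)
  have Ac: "A \<in> carrier_mat m m" and Bc: "B \<in> carrier_mat m m" using A B in_filt_carrier by auto
  then show "A * B \<in> carrier_mat m m" by simp
  fix i j assume ij: "i < m" "j < m"
  show "depth_ge (s + t) i j ((A * B) $$ (i, j))"
    unfolding mult_mat_entry[OF Ac Bc ij]
    by (rule depth_ge_sum) (auto intro!: depth_ge_mult in_filt_entry A B ij)
qed

lemma in_filt_add: "in_filt s A \<Longrightarrow> in_filt s B \<Longrightarrow> in_filt s (A + B)"
  by (auto simp: in_filt_def intro!: depth_ge_add)

lemma in_filt_diff: "in_filt s A \<Longrightarrow> in_filt s B \<Longrightarrow> in_filt s (A - B)"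
  by (auto simp: in_filt_def intro!: depth_ge_diff)

lemma in_filt_unit_smult: "vunit v a \<Longrightarrow> in_filt s A \<Longrightarrow> in_filt s (a \<cdot>\<^sub>m A)"
  by (auto simp: in_filt_def intro!: depth_ge_unit_mult)

lemma in_filt_one: "in_filt 0 (1\<^sub>m m)"
  by (auto simp: in_filt_def depth_ge_def)

lemma in_filt_pow: "in_filt s A \<Longrightarrow> in_filt (int k * s) (A ^\<^sub>m k)"
proof (induction k)
  case 0
  then show ?case using in_filt_one in_filt_carrier by auto
next
  case (Suc k)
  then have "in_filt (int k * s + s) (A ^\<^sub>m k * A)" by (intro in_filt_mult) auto
  then show ?case by (simp add: algebra_simps)
qed

lemma in_filt_diff_commute:
  assumes "in_filt s (A - B)" "A \<in> carrier_mat m m" "B \<in> carrier_mat m m"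
  shows "in_filt s (B - A)"
  unfolding in_filt_def
proof (intro conjI allI impI)
  fix i j assume ij: "i < m" "j < m"
  have "depth_ge s i j (- (A $$ (i, j) - B $$ (i, j)))"
    using in_filt_entry[OF assms(1) ij] assms(2,3) ij by (intro depth_ge_uminus) simp
  then show "depth_ge s i j ((B - A) $$ (i, j))" using assms(2,3) ij by simp
qed (use assms in auto)

text \<open>Modulo higher depth, an entry of a product with a matrix in \<open>P\<^sup>0\<close> only sees the diagonal
  of that matrix.\<close>

lemma mult_entry_depth_left:
  assumes A: "in_filt 0 A" and B: "in_filt s B" and ij: "i < m" "j < m"
  shows "depth_ge (s + 1) i j ((A * B) $$ (i, j) - A $$ (i, i) * B $$ (i, j))"
proof -
  have Ac: "A \<in> carrier_mat m m" and Bc: "B \<in> carrier_mat m m" using A B in_filt_carrier by auto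
  have "(A * B) $$ (i, j) = A $$ (i, i) * B $$ (i, j) + (\<Sum>k\<in>{..<m} - {i}. A $$ (i, k) * B $$ (k, j))"
    unfolding mult_mat_entry[OF Ac Bc ij] using ij by (simp add: sum.remove)
  moreover have "depth_ge (1 + s) i j (\<Sum>k\<in>{..<m} - {i}. A $$ (i, k) * B $$ (k, j))"
    by (rule depth_ge_sum) (auto intro!: depth_ge_mult depth_ge_one_off_diag in_filt_entry A B ij)
  ultimately show ?thesis by (simp add: add.commute)
qed

lemma mult_entry_depth_right:
  assumes B: "in_filt s B" and A: "in_filt 0 A" and ij: "i < m" "j < m"
  shows "depth_ge (s + 1) i j ((B * A) $$ (i, j) - B $$ (i, j) * A $$ (j, j))"
proof -
  have Ac: "A \<in> carrier_mat m m" and Bc: "B \<in> carrier_mat m m" using A B in_filt_carrier by auto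
  have "(B * A) $$ (i, j) = B $$ (i, j) * A $$ (j, j) + (\<Sum>k\<in>{..<m} - {j}. B $$ (i, k) * A $$ (k, j))"
    unfolding mult_mat_entry[OF Bc Ac ij] using ij by (simp add: sum.remove[where x=j])
  moreover have "depth_ge (s + 1) i j (\<Sum>k\<in>{..<m} - {j}. B $$ (i, k) * A $$ (k, j))"
    by (rule depth_ge_sum) (auto intro!: depth_ge_mult depth_ge_one_off_diag in_filt_entry A B ij)
  ultimately show ?thesis by simp
qed

lemma mult_entry_depth_eq_left:
  assumes A: "in_filt 0 A" "depth_eq 0 i i (A $$ (i, i))"
    and B: "in_filt s B" "depth_eq s i j (B $$ (i, j))" and ij: "i < m" "j < m"
  shows "depth_eq s i j ((A * B) $$ (i, j))"
proof -
  have "depth_eq s i j (A $$ (i, i) * B $$ (i, j))" using depth_eq_mult[OF A(2) B(2)] by simp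
  from depth_eq_add[OF this mult_entry_depth_left[OF A(1) B(1) ij]] show ?thesis by simp
qed

lemma exists_min_depth:
  assumes N: "N \<in> carrier_mat m m" and nz: "N \<noteq> 0\<^sub>m m m"
  obtains s i j where "i < m" "j < m" "in_filt s N" "depth_eq s i j (N $$ (i, j))"
proof -
  define S where "S = {(i, j). i < m \<and> j < m \<and> N $$ (i, j) \<noteq> 0}"
  define dp where "dp = (\<lambda>(i, j). int m * v (N $$ (i, j)) + int j - int i)"
  have "S \<subseteq> {..<m} \<times> {..<m}" by (auto simp: S_def)
  then have fin: "finite (dp ` S)" by (intro finite_imageI) (rule finite_subset, auto)
  have "S \<noteq> {}" using nz N by (auto simp: S_def intro!: eq_matI)
  then have "Min (dp ` S) \<in> dp ` S" using Min_in[OF fin] by blast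
  then obtain i j where ij: "(i, j) \<in> S" and min: "dp (i, j) = Min (dp ` S)" by auto
  have "in_filt (dp (i, j)) N"
    unfolding in_filt_def
  proof (intro conjI allI impI N)
    fix a b assume ab: "a < m" "b < m"
    show "depth_ge (dp (i, j)) a b (N $$ (a, b))"
    proof (cases "N $$ (a, b) = 0")
      case False
      then have "dp (a, b) \<in> dp ` S" using ab by (simp add: S_def)
      then have "dp (i, j) \<le> dp (a, b)" unfolding min using fin by simp
      then show ?thesis by (simp add: dp_def depth_ge_def)
    qed simp
  qed
  moreover have "depth_eq (dp (i, j)) i j (N $$ (i, j))" using ij by (simp add: S_def dp_def depth_eq_def)
  ultimately show thesis using that ij by (auto simp: S_def)
qed

lemma exists_diag_depth_eq_zero:
  assumes M: "in_filt 0 M" "\<not> in_filt 1 M"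
  obtains i where "i < m" "depth_eq 0 i i (M $$ (i, i))"
proof -
  obtain i j where ij: "i < m" "j < m" "\<not> depth_ge 1 i j (M $$ (i, j))"
    using M in_filt_carrier by (auto simp: in_filt_def)
  then have "depth_eq 0 i j (M $$ (i, j))" using in_filt_entry[OF M(1) ij(1,2)] by (simp add: depth_eq_iff)
  moreover from this have "i = j" using depth_eq_zero_imp_diag ij by blast
  ultimately show thesis using that ij by blast
qed

definition in_iwahori :: "'a mat \<Rightarrow> bool" where
  "in_iwahori N \<longleftrightarrow> in_filt 0 N \<and> (\<forall>i<m. depth_eq 0 i i (N $$ (i, i)))"

definition in_iwahori_plus :: "'a mat \<Rightarrow> bool" where
  "in_iwahori_plus N \<longleftrightarrow> N \<in> carrier_mat m m \<and> in_filt 1 (N - 1\<^sub>m m)"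

lemma in_iwahori_no_kernel:
  assumes A: "in_iwahori A" and R: "R \<in> carrier_mat m m" and AR: "A * R = 0\<^sub>m m m"
  shows "R = 0\<^sub>m m m"
proof (rule ccontr)
  assume "R \<noteq> 0\<^sub>m m m"
  then obtain s i j where "i < m" "j < m" "in_filt s R" "depth_eq s i j (R $$ (i, j))"
    using exists_min_depth[OF R] by blast
  then have "depth_eq s i j ((A * R) $$ (i, j))"
    using A by (intro mult_entry_depth_eq_left) (auto simp: in_iwahori_def)
  then show False using AR \<open>i < m\<close> \<open>j < m\<close> by (simp add: depth_eq_def)
qed

lemma in_iwahori_det: assumes A: "in_iwahori A" shows "det A \<noteq> 0"
proof
  assume "det A = 0"
  have Ac: "A \<in> carrier_mat m m" using A by (simp add: in_iwahori_def in_filt_def)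
  from det_0_iff_vec_prod_zero_field[OF Ac] \<open>det A = 0\<close>
  obtain w where w: "w \<in> carrier_vec m" "w \<noteq> 0\<^sub>v m" "A *\<^sub>v w = 0\<^sub>v m" by blast
  define R where "R = mat m m (\<lambda>(i, j). w $ i)"
  have "A * R = 0\<^sub>m m m"
  proof (rule eq_matI)
    fix i j assume ij: "i < dim_row (0\<^sub>m m m)" "j < dim_col (0\<^sub>m m m)"
    have "(A * R) $$ (i, j) = (A *\<^sub>v w) $ i"
      using ij Ac w(1) by (auto simp: R_def scalar_prod_def intro!: sum.cong)
    then show "(A * R) $$ (i, j) = 0\<^sub>m m m $$ (i, j)" using w(3) ij by simp
  qed (use Ac in \<open>auto simp: R_def\<close>)
  then have "R = 0\<^sub>m m m" by (rule in_iwahori_no_kernel[OF A, rotated]) (simp add: R_def)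
  have "w $ i = 0" if "i < m" for i
  proof -
    have "R $$ (i, 0) = w $ i" using that m_pos by (simp add: R_def)
    then show ?thesis using \<open>R = 0\<^sub>m m m\<close> that m_pos by simp
  qed
  then have "w = 0\<^sub>v m" using w(1) by (auto intro!: eq_vecI)
  then show False using w(2) by simp
qed

lemma in_iwahori_inverse:
  assumes A: "in_iwahori A"
  obtains B where "in_filt 0 B" "A * B = 1\<^sub>m m" "B * A = 1\<^sub>m m"
proof -
  have Ac: "A \<in> carrier_mat m m" using A by (simp add: in_iwahori_def in_filt_def)
  from det_non_zero_imp_unit[OF Ac in_iwahori_det[OF A], of "()"]
  obtain B where Bc: "B \<in> carrier_mat m m" and BA: "B * A = 1\<^sub>m m" and AB: "A * B = 1\<^sub>m m"
    unfolding Units_def ring_mat_def by auto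
  have "in_filt 0 B"
  proof (rule ccontr)
    assume nB: "\<not> in_filt 0 B"
    then have "B \<noteq> 0\<^sub>m m m" using in_filt_def by auto
    then obtain s i j where ij: "i < m" "j < m" "in_filt s B" "depth_eq s i j (B $$ (i, j))"
      using exists_min_depth[OF Bc] by blast
    have "s < 0" using ij(3) nB in_filt_mono[of 0 s B] by (cases "0 \<le> s") auto
    have "depth_eq s i j ((A * B) $$ (i, j))"
      using A ij by (intro mult_entry_depth_eq_left) (auto simp: in_iwahori_def)
    then show False using AB ij \<open>s < 0\<close> by (cases "i = j") (auto simp: depth_eq_def)
  qed
  then show thesis using that AB BA by blast
qed

lemma in_iwahori_GL: assumes "in_iwahori A" shows "A \<in> GL m"
proof -
  obtain B where "in_filt 0 B" "A * B = 1\<^sub>m m" using in_iwahori_inverse[OF assms] by blast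
  then show ?thesis using assms by (intro GL_I[of A m B]) (auto simp: in_iwahori_def in_filt_def)
qed

lemma in_iwahori_of_inverse:
  assumes A: "in_filt 0 A" and B: "in_filt 0 B" and AB: "A * B = 1\<^sub>m m"
  shows "in_iwahori A"
  unfolding in_iwahori_def
proof (intro conjI allI impI A)
  fix i assume i: "i < m"
  have r: "depth_ge 1 i i (1 - A $$ (i, i) * B $$ (i, i))"
    using mult_entry_depth_left[OF A B i i] AB i by simp
  have a: "depth_ge 0 i i (A $$ (i, i))" and b: "depth_ge 0 i i (B $$ (i, i))"
    using A B i in_filt_entry by auto
  have not1: "\<not> depth_ge 1 i i (1::'a)" by (simp add: depth_ge_def)
  have ne: "A $$ (i, i) \<noteq> 0" "B $$ (i, i) \<noteq> 0" using r not1 by auto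
  have va: "v (A $$ (i, i)) \<ge> 0" "v (B $$ (i, i)) \<ge> 0" using a b ne m_pos
    by (auto simp: depth_ge_def zero_le_mult_iff)
  have "v (A $$ (i, i)) + v (B $$ (i, i)) = 0"
  proof (rule ccontr)
    assume "v (A $$ (i, i)) + v (B $$ (i, i)) \<noteq> 0"
    then have "vP v (A $$ (i, i) * B $$ (i, i))" using va v_mult ne by (auto simp: vP_def)
    then have "depth_ge 1 i i (A $$ (i, i) * B $$ (i, i))" by (simp add: depth_ge_one_diag_iff)
    from depth_ge_add[OF r this] show False using not1 by simp
  qed
  then show "depth_eq 0 i i (A $$ (i, i))" using va ne by (simp add: depth_eq_zero_diag_iff vunit_def)
qed

lemma in_iwahori_conj:
  assumes A: "in_iwahori A" and P: "in_filt k P" and Q: "in_filt (- k) Q"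
    and PQ: "P * Q = 1\<^sub>m m"
  shows "in_iwahori (P * A * Q)"
proof -
  obtain B where B: "in_filt 0 B" "A * B = 1\<^sub>m m" using in_iwahori_inverse[OF A] by blast
  have c: "P \<in> carrier_mat m m" "Q \<in> carrier_mat m m" "A \<in> carrier_mat m m" "B \<in> carrier_mat m m"
    using A B P Q in_filt_carrier in_iwahori_def by auto
  have QP: "Q * P = 1\<^sub>m m" by (rule mat_mult_left_right_inverse[OF c(1,2) PQ])
  have "(P * A * Q) * (P * B * Q) = P * (A * B) * Q" by (rule mult_mat_cancel_mid) (use c QP in auto)
  then have inv: "(P * A * Q) * (P * B * Q) = 1\<^sub>m m" using B(2) PQ c by simp
  have "in_filt (k + 0 + - k) (P * A * Q)" using A by (intro in_filt_mult P Q) (simp add: in_iwahori_def)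
  moreover have "in_filt (k + 0 + - k) (P * B * Q)" by (intro in_filt_mult P Q B(1))
  ultimately show ?thesis using in_iwahori_of_inverse[OF _ _ inv] by simp
qed

lemma in_iwahori_plus_carrier: "in_iwahori_plus A \<Longrightarrow> A \<in> carrier_mat m m"
  by (simp add: in_iwahori_plus_def)

lemma in_iwahori_plus_in_filt: assumes "in_iwahori_plus A" shows "in_filt 0 A"
proof -
  have Ac: "A \<in> carrier_mat m m" using assms by (simp add: in_iwahori_plus_def)
  have "in_filt 0 (A - 1\<^sub>m m + 1\<^sub>m m)"
    using assms in_filt_mono[of 0 1] by (intro in_filt_add in_filt_one) (auto simp: in_iwahori_plus_def)
  moreover have "A - 1\<^sub>m m + 1\<^sub>m m = A" using Ac by (auto intro!: eq_matI)
  ultimately show ?thesis by simp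
qed

lemma in_iwahori_plus_in_iwahori: assumes A: "in_iwahori_plus A" shows "in_iwahori A"
  unfolding in_iwahori_def
proof (intro conjI allI impI)
  show "in_filt 0 A" by (rule in_iwahori_plus_in_filt[OF A])
  fix i assume i: "i < m"
  have "depth_ge 1 i i ((A - 1\<^sub>m m) $$ (i, i))"
    using A i by (intro in_filt_entry) (auto simp: in_iwahori_plus_def)
  then have "depth_ge (0 + 1) i i (A $$ (i, i) - 1)" using A i by (simp add: in_iwahori_plus_def)
  from depth_eq_add[OF _ this, of 1] show "depth_eq 0 i i (A $$ (i, i))"
    by (simp add: depth_eq_def)
qed

lemma in_iwahori_plus_GL: "in_iwahori_plus A \<Longrightarrow> A \<in> GL m"
  by (intro in_iwahori_GL in_iwahori_plus_in_iwahori)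

lemma in_iwahori_plus_mult:
  assumes A: "in_iwahori_plus A" and B: "in_iwahori_plus B"
  shows "in_iwahori_plus (A * B)"
proof -
  have Ac: "A \<in> carrier_mat m m" and Bc: "B \<in> carrier_mat m m" using A B by (auto simp: in_iwahori_plus_def)
  have "A * B - 1\<^sub>m m = (A - 1\<^sub>m m) * B + (B - 1\<^sub>m m)"
    using Ac Bc by (auto simp: minus_mult_distrib_mat intro!: eq_matI)
  moreover have "in_filt (1 + 0) ((A - 1\<^sub>m m) * B)"
    using A in_iwahori_plus_in_filt[OF B] by (intro in_filt_mult) (auto simp: in_iwahori_plus_def)
  ultimately have "in_filt 1 (A * B - 1\<^sub>m m)" using B in_filt_add by (simp add: in_iwahori_plus_def)
  then show ?thesis using Ac Bc by (simp add: in_iwahori_plus_def)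
qed

lemma in_iwahori_plus_conj:
  assumes W: "in_iwahori_plus W" and P: "in_filt k P" and Q: "in_filt (- k) Q"
    and PQ: "P * Q = 1\<^sub>m m"
  shows "in_iwahori_plus (P * W * Q)"
proof -
  have c: "W \<in> carrier_mat m m" "P \<in> carrier_mat m m" "Q \<in> carrier_mat m m"
    using W P Q by (auto simp: in_iwahori_plus_def in_filt_def)
  have "P * (W - 1\<^sub>m m) * Q = P * W * Q - P * Q"
    using c by (simp add: mult_minus_distrib_mat minus_mult_distrib_mat[of _ m m _ _ m])
  moreover have "in_filt (k + 1 + - k) (P * (W - 1\<^sub>m m) * Q)"
    using W by (intro in_filt_mult P Q) (simp add: in_iwahori_plus_def)
  ultimately show ?thesis using c PQ by (simp add: in_iwahori_plus_def)
qed

lemma in_iwahori_plus_inverse: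
  assumes W: "in_iwahori_plus W"
  obtains B where "in_iwahori_plus B" "W * B = 1\<^sub>m m"
proof -
  obtain B where B: "in_filt 0 B" "W * B = 1\<^sub>m m"
    using in_iwahori_inverse[OF in_iwahori_plus_in_iwahori[OF W]] by blast
  have c: "W \<in> carrier_mat m m" "B \<in> carrier_mat m m" using W B by (auto simp: in_iwahori_plus_def in_filt_def)
  have "(W - 1\<^sub>m m) * B = 1\<^sub>m m - B" using c B by (simp add: minus_mult_distrib_mat)
  moreover have "in_filt (1 + 0) ((W - 1\<^sub>m m) * B)"
    using W by (intro in_filt_mult B) (simp add: in_iwahori_plus_def)
  ultimately have "in_filt 1 (B - 1\<^sub>m m)" using in_filt_diff_commute c by auto
  then show thesis using that B c by (auto simp: in_iwahori_plus_def)
qed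

lemma in_iwahori_plus_of_Iwahori_plus:
  assumes "N \<in> Iwahori_plus v m"
  shows "in_iwahori_plus N"
proof -
  have N: "N \<in> carrier_mat m m" "\<forall>i<m. \<forall>j<m. vO v (N $$ (i, j))"
    "\<forall>i<m. \<forall>j<m. j < i \<longrightarrow> vP v (N $$ (i, j))" "\<forall>i<m. vP v (N $$ (i, i) - 1)"
    using assms by (auto simp: Iwahori_plus_def Iwahori_def)
  have "depth_ge 1 i j ((N - 1\<^sub>m m) $$ (i, j))" if ij: "i < m" "j < m" for i j
  proof -
    consider "i < j" | "i = j" | "j < i" by linarith
    then show ?thesis
    proof cases
      case 1
      have "N $$ (i, j) = 0 \<or> 0 \<le> int m * v (N $$ (i, j))" using N(2) ij by (auto simp: vO_def zero_le_mult_iff)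
      then show ?thesis using 1 N(1) ij by (auto simp: depth_ge_def)
    next
      case 2
      then show ?thesis using N(1,4) ij by (simp add: depth_ge_one_diag_iff)
    next
      case 3
      show ?thesis
      proof (cases "N $$ (i, j) = 0")
        case False
        moreover have "vP v (N $$ (i, j))" using N(3) ij 3 by blast
        ultimately have "1 \<le> v (N $$ (i, j))" by (simp add: vP_def)
        then have "int m \<le> int m * v (N $$ (i, j))" using mult_left_mono[of 1 _ "int m"] by simp
        then have "depth_ge 1 i j (N $$ (i, j))" unfolding depth_ge_def using 3 ij by linarith
        then show ?thesis using 3 N(1) ij by simp
      qed (use 3 N(1) ij in simp)
    qed
  qed
  then show ?thesis using N(1) by (auto simp: in_iwahori_plus_def in_filt_def)
qed

lemma Iwahori_of_in_iwahori:
  assumes N: "in_iwahori N"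
  shows "N \<in> Iwahori v m"
proof -
  have N0: "in_filt 0 N" using N by (simp add: in_iwahori_def)
  have "vO v (N $$ (i, j))" if ij: "i < m" "j < m" for i j
  proof (rule ccontr)
    assume "\<not> vO v (N $$ (i, j))"
    then have "N $$ (i, j) \<noteq> 0" "int m * v (N $$ (i, j)) \<le> - int m"
      using mult_left_mono[of "v (N $$ (i, j))" "-1" "int m"] by (auto simp: vO_def)
    then show False using in_filt_entry[OF N0 ij] ij by (auto simp: depth_ge_def)
  qed
  moreover have "vP v (N $$ (i, j))" if ij: "i < m" "j < m" "j < i" for i j
  proof (rule ccontr)
    assume "\<not> vP v (N $$ (i, j))"
    then have "N $$ (i, j) \<noteq> 0" "int m * v (N $$ (i, j)) \<le> 0"
      using mult_left_mono[of "v (N $$ (i, j))" 0 "int m"] by (auto simp: vP_def)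
    then show False
      using depth_ge_one_off_diag[OF ij(1,2) _ in_filt_entry[OF N0 ij(1,2)]] ij by (auto simp: depth_ge_def)
  qed
  moreover have "vunit v (N $$ (i, i))" if "i < m" for i
    using N that by (simp add: in_iwahori_def depth_eq_zero_diag_iff)
  ultimately show ?thesis using in_filt_carrier[OF N0] by (auto simp: Iwahori_def)
qed

lemma intertwine_diag_depth:
  assumes M: "in_filt 0 M" "depth_eq 0 i i (M $$ (i, i))" and X: "in_filt 1 X" and Y: "in_filt 0 Y"
    and MXY: "M * X = Y * M" and i: "i < m"
  shows "depth_ge 1 i i (Y $$ (i, i))"
proof -
  have "depth_ge 1 i i ((Y * M) $$ (i, i))"
    using in_filt_entry[OF in_filt_mult[OF M(1) X] i i] MXY by simp
  then have YM: "depth_ge 1 i i (Y $$ (i, i) * M $$ (i, i))"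
    using depth_ge_diff[OF _ mult_entry_depth_right[OF Y M(1) i i]] by fastforce
  have u: "vunit v (M $$ (i, i))" using M(2) by (simp add: depth_eq_zero_diag_iff)
  then have "vunit v (inverse (M $$ (i, i)))" by (simp add: vunit_def v_inverse)
  from depth_ge_unit_mult[OF this YM]
  have "depth_ge 1 i i (inverse (M $$ (i, i)) * (Y $$ (i, i) * M $$ (i, i)))" .
  moreover have "inverse (M $$ (i, i)) * (Y $$ (i, i) * M $$ (i, i)) = Y $$ (i, i)"
    using u by (simp add: vunit_def)
  ultimately show ?thesis by simp
qed

lemma intertwine_diag_unit:
  assumes M: "in_filt 0 M" "depth_eq 0 i i (M $$ (i, i))"
    and X: "in_filt 1 X" "depth_eq 1 i j (X $$ (i, j))" and Y: "in_filt 1 Y"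
    and MXY: "M * X = Y * M" and ij: "i < m" "j < m"
  shows "depth_eq 0 j j (M $$ (j, j))"
proof (rule ccontr)
  assume "\<not> ?thesis"
  then have "depth_ge 1 j j (M $$ (j, j))" using in_filt_entry[OF M(1) ij(2) ij(2)] by (simp add: depth_eq_iff)
  then have "depth_ge (1 + 1) i j (Y $$ (i, j) * M $$ (j, j))"
    using depth_ge_mult in_filt_entry[OF Y ij] by blast
  then have "depth_ge (1 + 1) i j ((Y * M) $$ (i, j))"
    using depth_ge_add[OF mult_entry_depth_right[OF Y M(1) ij]] by fastforce
  moreover have "depth_eq 1 i j ((M * X) $$ (i, j))" by (rule mult_entry_depth_eq_left[OF M X ij])
  ultimately show False using MXY by (simp add: depth_eq_iff)
qed

lemma in_iwahori_of_diag_unit_succ: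
  assumes M: "in_filt 0 M" and i0: "i0 < m" "depth_eq 0 i0 i0 (M $$ (i0, i0))"
    and succ: "\<And>i. i < m \<Longrightarrow> depth_eq 0 i i (M $$ (i, i)) \<Longrightarrow>
      depth_eq 0 (Suc i mod m) (Suc i mod m) (M $$ (Suc i mod m, Suc i mod m))"
  shows "in_iwahori M"
proof -
  have "depth_eq 0 ((i0 + k) mod m) ((i0 + k) mod m) (M $$ ((i0 + k) mod m, (i0 + k) mod m))" for k
  proof (induction k)
    case (Suc k)
    from succ[OF _ Suc] show ?case using m_pos by (simp add: mod_Suc_eq)
  qed (use i0 in simp)
  moreover have "(i0 + (m + i - i0)) mod m = i" if "i < m" for i using that i0(1) by simp
  ultimately show ?thesis using M by (metis in_iwahori_def)
qed

lemma unit_smult_in_iwahori_plus: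
  assumes eps: "vunit v eps" and W: "in_iwahori_plus W" and i: "i < m"
    and Y: "depth_ge 1 i i ((eps \<cdot>\<^sub>m W - 1\<^sub>m m) $$ (i, i))"
  shows "in_iwahori_plus (eps \<cdot>\<^sub>m W)"
proof -
  have Wc: "W \<in> carrier_mat m m" and W1: "in_filt 1 (W - 1\<^sub>m m)" using W by (auto simp: in_iwahori_plus_def)
  have entry: "(eps \<cdot>\<^sub>m W - 1\<^sub>m m) $$ (a, b) =
      eps * (W - 1\<^sub>m m) $$ (a, b) + (if a = b then eps - 1 else 0)" if "a < m" "b < m" for a b
    using that Wc by (simp add: algebra_simps)
  have W1e: "depth_ge 1 a b (eps * (W - 1\<^sub>m m) $$ (a, b))" if "a < m" "b < m" for a b
    using depth_ge_unit_mult[OF eps in_filt_entry[OF W1 that]] .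
  have "depth_ge 1 i i (eps - 1)"
    using depth_ge_diff[OF Y W1e[OF i i]] entry[OF i i] by simp
  then have "depth_ge 1 a a (eps - 1)" for a by (simp add: depth_ge_one_diag_iff)
  then have "depth_ge 1 a b ((eps \<cdot>\<^sub>m W - 1\<^sub>m m) $$ (a, b))" if "a < m" "b < m" for a b
    unfolding entry[OF that] using W1e[OF that] by (intro depth_ge_add) auto
  then have "in_filt 1 (eps \<cdot>\<^sub>m W - 1\<^sub>m m)" using Wc by (simp add: in_filt_def minus_carrier_mat)
  then show ?thesis using Wc by (simp add: in_iwahori_plus_def)
qed

end

section \<open>The unitary involution\<close>

locale unramified_unitary =
  fixes v :: "'a::field_char_0 \<Rightarrow> int" and c :: "'a \<Rightarrow> 'a" and uf :: 'a and m :: nat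
  assumes unramified: "unramified_quadratic_setup v c uf" and dim_even: "even m" and dim_pos: "0 < m"

sublocale unramified_unitary \<subseteq> iwahori_filtration v m
  using unramified dim_pos
  by unfold_locales (simp_all add: unramified_quadratic_setup_def p_adic_field_def)

context unramified_unitary
begin

lemma c_add: "c (x + y) = c x + c y" using unramified unfolding unramified_quadratic_setup_def by blast
lemma c_mult: "c (x * y) = c x * c y" using unramified unfolding unramified_quadratic_setup_def by blast
lemma c_c [simp]: "c (c x) = x" using unramified unfolding unramified_quadratic_setup_def by blast
lemma v_c: "x \<noteq> 0 \<Longrightarrow> v (c x) = v x" using unramified unfolding unramified_quadratic_setup_def by blast
lemma c_uf [simp]: "c uf = uf" using unramified unfolding unramified_quadratic_setup_def by blast
lemma uf_nonzero [simp]: "uf \<noteq> 0" using unramified unfolding unramified_quadratic_setup_def by blast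
lemma v_uf [simp]: "v uf = 1" using unramified unfolding unramified_quadratic_setup_def by blast

lemma c_zero [simp]: "c 0 = 0"
  using c_add[of 0 0] by simp

lemma c_eq_zero_iff [simp]: "c x = 0 \<longleftrightarrow> x = 0"
  using c_c[of x] by (metis c_zero)

lemma c_one [simp]: "c 1 = 1"
proof -
  have "c 1 \<noteq> 0" by simp
  moreover have "c 1 = c 1 * c 1" using c_mult[of 1 1] by simp
  ultimately show ?thesis by (metis mult_cancel_left1)
qed

sublocale c_hom: field_hom c
  by unfold_locales (auto simp: c_add c_mult)

lemma m_ge_2: "2 \<le> m"
  using dim_even dim_pos by presburger

lemma Suc_mod_m: "i < m \<Longrightarrow> Suc i mod m = (if i = m - 1 then 0 else Suc i)"
  by (auto simp: mod_Suc)

lemma Suc_mod_m_inj: "i < m \<Longrightarrow> j < m \<Longrightarrow> Suc i mod m = Suc j mod m \<Longrightarrow> i = j"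
  using m_pos by (auto simp: Suc_mod_m split: if_splits)

abbreviation phi :: "'a mat" where "phi \<equiv> phi1 uf m"

definition psi :: "'a mat" where
  "psi = mat m m (\<lambda>(i, j). if i = Suc j mod m then (if j = m - 1 then inverse uf else 1) else 0)"

lemma phi_carrier [simp]: "phi \<in> carrier_mat m m" by (simp add: phi1_def)
lemma psi_carrier [simp]: "psi \<in> carrier_mat m m" by (simp add: psi_def)
lemma phi_dim [simp]: "dim_row phi = m" "dim_col phi = m" by (simp_all add: phi1_def)
lemma psi_dim [simp]: "dim_row psi = m" "dim_col psi = m" by (simp_all add: psi_def)

lemma phi_entry: "i < m \<Longrightarrow> k < m \<Longrightarrow>
  phi $$ (i, k) = (if k = Suc i mod m then (if i = m - 1 then uf else 1) else 0)"
  using m_ge_2 by (auto simp: phi1_def Suc_mod_m)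

lemma psi_entry: "i < m \<Longrightarrow> k < m \<Longrightarrow>
  psi $$ (i, k) = (if i = Suc k mod m then (if k = m - 1 then inverse uf else 1) else 0)"
  by (simp add: psi_def)

lemma phi_psi: "phi * psi = 1\<^sub>m m"
proof (rule eq_matI)
  fix i j assume "i < dim_row (1\<^sub>m m)" "j < dim_col (1\<^sub>m m)"
  then have ij: "i < m" "j < m" by auto
  have "(phi * psi) $$ (i, j) = (\<Sum>k<m. phi $$ (i, k) * psi $$ (k, j))"
    by (rule mult_mat_entry) (use ij in auto)
  also have "\<dots> = (\<Sum>k<m. if k = Suc i mod m then (if i = m - 1 then uf else 1) * psi $$ (Suc i mod m, j) else 0)"
    by (rule sum.cong) (auto simp: phi_entry ij)
  also have "\<dots> = (if i = m - 1 then uf else 1) * psi $$ (Suc i mod m, j)"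
    using m_pos by simp
  also have "\<dots> = (if i = j then 1 else 0)"
    using Suc_mod_m_inj[OF ij] ij m_pos by (auto simp: psi_entry)
  finally show "(phi * psi) $$ (i, j) = 1\<^sub>m m $$ (i, j)" using ij by simp
qed (auto simp: phi1_def psi_def)

lemma psi_phi: "psi * phi = 1\<^sub>m m"
  using mat_mult_left_right_inverse[OF phi_carrier psi_carrier phi_psi] .

lemma minv_phi: "minv phi = psi"
  by (rule minv_eqI[OF phi_carrier psi_carrier phi_psi])

lemma phi_GL: "phi \<in> GL m" by (rule GL_I[OF phi_carrier psi_carrier phi_psi])
lemma psi_GL: "psi \<in> GL m" by (rule GL_I[OF psi_carrier phi_carrier psi_phi])

lemma in_filt_phi: "in_filt 1 phi"
  using m_ge_2 by (auto simp: in_filt_def phi_entry Suc_mod_m depth_ge_def)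

lemma in_filt_psi: "in_filt (-1) psi"
  using m_ge_2 by (auto simp: in_filt_def psi_entry Suc_mod_m depth_ge_def v_inverse)

lemma phi_psi_pow: "phi ^\<^sub>m k * psi ^\<^sub>m k = 1\<^sub>m m" "psi ^\<^sub>m k * phi ^\<^sub>m k = 1\<^sub>m m"
proof (induction k)
  case (Suc k)
  have "phi ^\<^sub>m Suc k * psi ^\<^sub>m Suc k = (phi ^\<^sub>m k * phi) * (psi * psi ^\<^sub>m k)"
    using pow_mat_Suc_left[OF psi_carrier] by simp
  also have "\<dots> = phi ^\<^sub>m k * (phi * psi) * psi ^\<^sub>m k" by (rule mult_mat_assoc4[of _ m]) auto
  finally show "phi ^\<^sub>m Suc k * psi ^\<^sub>m Suc k = 1\<^sub>m m" using Suc(1) by (simp add: phi_psi)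
  have "psi ^\<^sub>m Suc k * phi ^\<^sub>m Suc k = (psi ^\<^sub>m k * psi) * (phi * phi ^\<^sub>m k)"
    using pow_mat_Suc_left[OF phi_carrier] by simp
  also have "\<dots> = psi ^\<^sub>m k * (psi * phi) * phi ^\<^sub>m k" by (rule mult_mat_assoc4[of _ m]) auto
  finally show "psi ^\<^sub>m Suc k * phi ^\<^sub>m Suc k = 1\<^sub>m m" using Suc(2) by (simp add: psi_phi)
qed (auto simp: phi1_def psi_def)

definition phi_zpow :: "int \<Rightarrow> 'a mat" where
  "phi_zpow t = (if 0 \<le> t then phi ^\<^sub>m nat t else psi ^\<^sub>m nat (- t))"

lemma phi_zpow_carrier [simp]: "phi_zpow t \<in> carrier_mat m m"
  by (simp add: phi_zpow_def)

lemma phi_zpow_dim [simp]: "dim_row (phi_zpow t) = m" "dim_col (phi_zpow t) = m"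
  by (simp_all add: phi_zpow_def)

lemma phi_zpow_nonneg: "0 \<le> t \<Longrightarrow> phi_zpow t = phi ^\<^sub>m nat t"
  by (simp add: phi_zpow_def)

lemma phi_zpow_nonpos: "t \<le> 0 \<Longrightarrow> phi_zpow t = psi ^\<^sub>m nat (- t)"
  by (cases "t = 0") (simp_all add: phi_zpow_def)

lemma phi_zpow_inverse: "phi_zpow t * phi_zpow (- t) = 1\<^sub>m m"
  using phi_psi_pow[of "nat t"] phi_psi_pow[of "nat (- t)"]
  by (cases "0 \<le> t") (simp_all add: phi_zpow_nonneg phi_zpow_nonpos)

lemma phi_zpow_GL: "phi_zpow t \<in> GL m"
  by (rule GL_I[OF phi_zpow_carrier phi_zpow_carrier phi_zpow_inverse])

lemma in_filt_phi_zpow: "in_filt t (phi_zpow t)"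
  using in_filt_pow[OF in_filt_phi, of "nat t"] in_filt_pow[OF in_filt_psi, of "nat (- t)"]
  by (auto simp: phi_zpow_def)

lemma cyclic_gen_phi_iff: "d \<in> cyclic_gen phi \<longleftrightarrow> (\<exists>t. d = phi_zpow t)"
proof
  assume "d \<in> cyclic_gen phi"
  then obtain k where "d = phi ^\<^sub>m k \<or> d = psi ^\<^sub>m k" unfolding cyclic_gen_def minv_phi by blast
  moreover have "phi ^\<^sub>m k = phi_zpow (int k)" by (simp add: phi_zpow_nonneg)
  moreover have "psi ^\<^sub>m k = phi_zpow (- int k)" by (simp add: phi_zpow_nonpos)
  ultimately show "\<exists>t. d = phi_zpow t" by blast
next
  assume "\<exists>t. d = phi_zpow t"
  then obtain t where "d = phi_zpow t" ..
  then have "d = phi ^\<^sub>m nat t \<or> d = psi ^\<^sub>m nat (- t)"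
    by (cases "0 \<le> t") (simp_all add: phi_zpow_nonneg phi_zpow_nonpos)
  then show "d \<in> cyclic_gen phi" unfolding cyclic_gen_def minv_phi by blast
qed

abbreviation J :: "'a mat" where "J \<equiv> Jmat m"

lemma J_carrier [simp]: "J \<in> carrier_mat m m" by (simp add: Jmat_def)
lemma J_dim [simp]: "dim_row J = m" "dim_col J = m" by (simp_all add: Jmat_def)

lemma J_entry: "i < m \<Longrightarrow> j < m \<Longrightarrow> J $$ (i, j) = (if j = m - 1 - i then (-1) ^ i else 0)"
  by (simp add: Jmat_def)

text \<open>Here the evenness of \<open>m\<close> enters: the signs of \<open>J\<close> alternate across its antidiagonal.\<close>

lemma minus_one_power_reflect: "k < m \<Longrightarrow> (-1::'a) ^ (m - 1 - k) = - ((-1) ^ k)"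
proof -
  assume k: "k < m"
  have "even (m - 1 - k) \<longleftrightarrow> odd k" using dim_even k m_pos by presburger
  then show ?thesis by (simp add: minus_one_power_iff)
qed

lemma minus_one_power_square: "(-1::'a) ^ i * (-1) ^ i = 1"
  by (simp add: power_add[symmetric])

lemma J_mult_entry: assumes Y: "Y \<in> carrier_mat m m" and ik: "i < m" "k < m"
  shows "(J * Y) $$ (i, k) = (-1) ^ i * Y $$ (m - 1 - i, k)"
proof -
  have "(J * Y) $$ (i, k) = (\<Sum>j<m. if j = m - 1 - i then (-1) ^ i * Y $$ (j, k) else 0)"
    unfolding mult_mat_entry[OF J_carrier Y ik] by (rule sum.cong) (use ik in \<open>auto simp: J_entry\<close>)
  then show ?thesis using ik by simp
qed

lemma mult_J_entry: assumes Y: "Y \<in> carrier_mat m m" and ik: "i < m" "k < m"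
  shows "(Y * J) $$ (i, k) = Y $$ (i, m - 1 - k) * (-1) ^ (m - 1 - k)"
proof -
  have "(Y * J) $$ (i, k) = (\<Sum>j<m. if j = m - 1 - k then Y $$ (i, j) * (-1) ^ (m - 1 - k) else 0)"
    unfolding mult_mat_entry[OF Y J_carrier ik] by (rule sum.cong) (use ik in \<open>auto simp: J_entry\<close>)
  then show ?thesis using ik by simp
qed

lemma J_mult_uminus_J: "J * ((-1) \<cdot>\<^sub>m J) = 1\<^sub>m m"
proof (rule eq_matI)
  fix i k assume "i < dim_row (1\<^sub>m m)" "k < dim_col (1\<^sub>m m)"
  then have ik: "i < m" "k < m" by auto
  have "(J * ((-1) \<cdot>\<^sub>m J)) $$ (i, k) = (-1) ^ i * (- J $$ (m - 1 - i, k))"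
    using J_mult_entry[of "(-1) \<cdot>\<^sub>m J" i k] ik by simp
  also have "\<dots> = (if i = k then 1 else 0)"
    using ik minus_one_power_reflect[of i] by (auto simp: J_entry minus_one_power_square)
  finally show "(J * ((-1) \<cdot>\<^sub>m J)) $$ (i, k) = 1\<^sub>m m $$ (i, k)" using ik by simp
qed auto

lemma minv_J: "minv J = (-1) \<cdot>\<^sub>m J"
  by (rule minv_eqI[OF J_carrier _ J_mult_uminus_J]) simp

lemma J_GL: "J \<in> GL m"
  by (rule GL_I[OF J_carrier _ J_mult_uminus_J]) simp

definition J_transpose :: "'a mat \<Rightarrow> 'a mat" where
  "J_transpose X = J * transpose_mat X * minv J"

lemma J_transpose_dim [simp]: "dim_row (J_transpose X) = m" "dim_col (J_transpose X) = m"
  by (simp_all add: J_transpose_def minv_J)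

lemma J_transpose_carrier [simp]: "J_transpose X \<in> carrier_mat m m"
  by (simp add: carrier_matI)

lemma J_transpose_entry:
  assumes X: "X \<in> carrier_mat m m" and ik: "i < m" "k < m"
  shows "J_transpose X $$ (i, k) = (-1) ^ i * (-1) ^ k * X $$ (m - 1 - k, m - 1 - i)"
proof -
  have JX: "J * transpose_mat X \<in> carrier_mat m m" by (rule mult_carrier_mat[OF J_carrier]) (simp add: X)
  have "J_transpose X $$ (i, k) = - ((J * transpose_mat X * J) $$ (i, k))"
    using ik mult_smult_distrib[OF JX J_carrier, of "-1"] by (simp add: J_transpose_def minv_J)
  also have "\<dots> = - ((-1) ^ i * X $$ (m - 1 - k, m - 1 - i) * (-1) ^ (m - 1 - k))"
    using mult_J_entry[OF JX ik] J_mult_entry[of "transpose_mat X" i "m - 1 - k"] X ik by simp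
  finally show ?thesis using minus_one_power_reflect[OF ik(2)] by (simp add: algebra_simps)
qed

lemma J_transpose_mult:
  assumes "A \<in> carrier_mat m m" "B \<in> carrier_mat m m"
  shows "J_transpose (A * B) = J_transpose B * J_transpose A"
proof -
  have "J_transpose B * J_transpose A = J * (transpose_mat B * transpose_mat A) * minv J"
    unfolding J_transpose_def by (rule mult_mat_cancel_mid) (use assms GL_minv[OF J_GL] in auto)
  then show ?thesis unfolding J_transpose_def using transpose_mult[OF assms] by simp
qed

lemma J_transpose_one: "J_transpose (1\<^sub>m m) = 1\<^sub>m m"
  using GL_minv[OF J_GL] by (simp add: J_transpose_def)

lemma J_transpose_smult: "X \<in> carrier_mat m m \<Longrightarrow> J_transpose (a \<cdot>\<^sub>m X) = a \<cdot>\<^sub>m J_transpose X"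
  by (rule eq_matI) (auto simp: J_transpose_entry)

lemma J_transpose_J_transpose:
  assumes X: "X \<in> carrier_mat m m"
  shows "J_transpose (J_transpose X) = X"
proof (rule eq_matI)
  fix i k assume "i < dim_row X" "k < dim_col X"
  then have ik: "i < m" "k < m" using X by auto
  show "J_transpose (J_transpose X) $$ (i, k) = X $$ (i, k)"
    using ik X minus_one_power_reflect[OF ik(1)] minus_one_power_reflect[OF ik(2)]
    by (simp add: J_transpose_entry algebra_simps minus_one_power_square)
qed (use X in auto)

lemma J_transpose_map_c: "X \<in> carrier_mat m m \<Longrightarrow> map_mat c (J_transpose X) = J_transpose (map_mat c X)"
  by (rule eq_matI) (auto simp: J_transpose_entry hom_distribs)

lemma J_transpose_diff_one:
  assumes X: "X \<in> carrier_mat m m"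
  shows "J_transpose (X - 1\<^sub>m m) = J_transpose X - 1\<^sub>m m"
proof (rule eq_matI)
  fix i k assume "i < dim_row (J_transpose X - 1\<^sub>m m)" "k < dim_col (J_transpose X - 1\<^sub>m m)"
  then have ik: "i < m" "k < m" by auto
  have X1: "X - 1\<^sub>m m \<in> carrier_mat m m" by (rule minus_carrier_mat) simp
  show "J_transpose (X - 1\<^sub>m m) $$ (i, k) = (J_transpose X - 1\<^sub>m m) $$ (i, k)"
    unfolding J_transpose_entry[OF X1 ik] using J_transpose_entry[OF X ik] ik X
    by (auto simp: algebra_simps minus_one_power_square)
qed auto

lemma in_filt_J_transpose:
  assumes X: "in_filt s X"
  shows "in_filt s (J_transpose X)"
  unfolding in_filt_def
proof (intro conjI allI impI J_transpose_carrier)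
  fix i k assume ik: "i < m" "k < m"
  have "depth_ge s (m - 1 - k) (m - 1 - i) (X $$ (m - 1 - k, m - 1 - i))"
    using X ik by (intro in_filt_entry) auto
  moreover have "int (m - 1 - i) - int (m - 1 - k) = int k - int i" using ik by linarith
  ultimately have "depth_ge s i k (X $$ (m - 1 - k, m - 1 - i))" by (auto simp: depth_ge_def)
  then show "depth_ge s i k (J_transpose X $$ (i, k))"
    using in_filt_carrier[OF X] ik
    by (simp add: J_transpose_entry mult.assoc depth_ge_minus_one_power)
qed

lemma depth_ge_c: "depth_ge s i j x \<Longrightarrow> depth_ge s i j (c x)"
  by (cases "x = 0") (auto simp: depth_ge_def v_c)

lemma in_filt_map_c: "in_filt s X \<Longrightarrow> in_filt s (map_mat c X)"
  by (auto simp: in_filt_def depth_ge_c)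

lemma
  assumes "X \<in> GL m"
  shows J_transpose_GL: "J_transpose X \<in> GL m"
    and minv_J_transpose: "minv (J_transpose X) = J_transpose (minv X)"
proof -
  note c = GL_carrier[OF assms] GL_minv[OF assms]
  have e: "J_transpose X * J_transpose (minv X) = 1\<^sub>m m"
    using J_transpose_mult[OF c(2,1)] c J_transpose_one by simp
  show "J_transpose X \<in> GL m" by (rule GL_I[OF _ _ e]) (use c in auto)
  show "minv (J_transpose X) = J_transpose (minv X)" by (rule minv_eqI[OF _ _ e]) (use c in auto)
qed

abbreviation th :: "'a mat \<Rightarrow> 'a mat" where "th \<equiv> theta c m"

lemma theta_eq: assumes A: "A \<in> GL m" shows "th A = minv (J_transpose (map_mat c A))"
proof -
  have T: "transpose_mat (map_mat c A) \<in> GL m" using GL_transpose c_hom.GL_map_mat(1)[OF A] by blast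
  note iT = GL_carrier[OF T] GL_minv[OF T]
  have "J_transpose (map_mat c A) * th A =
      J * (transpose_mat (map_mat c A) * minv (transpose_mat (map_mat c A))) * minv J"
    unfolding J_transpose_def theta_def by (rule mult_mat_cancel_mid) (use iT GL_minv[OF J_GL] in auto)
  also have "\<dots> = 1\<^sub>m m" using iT GL_minv[OF J_GL] by simp
  finally show ?thesis
    by (intro minv_eqI[symmetric]) (use iT GL_minv[OF J_GL] in \<open>auto simp: theta_def J_transpose_def\<close>)
qed

lemma theta_GL: "A \<in> GL m \<Longrightarrow> th A \<in> GL m"
  using theta_eq GL_minv_GL J_transpose_GL c_hom.GL_map_mat(1) by metis

lemma theta_mult:
  assumes A: "A \<in> GL m" and B: "B \<in> GL m"
  shows "th (A * B) = th A * th B"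
proof -
  have c: "A \<in> carrier_mat m m" "B \<in> carrier_mat m m" using A B GL_carrier by auto
  have "th (A * B) = minv (J_transpose (map_mat c B) * J_transpose (map_mat c A))"
    using theta_eq[OF GL_mult[OF A B]] c_hom.mat_hom_mult[OF c] J_transpose_mult c by simp
  also have "\<dots> = minv (J_transpose (map_mat c A)) * minv (J_transpose (map_mat c B))"
    by (rule minv_mult) (use A B J_transpose_GL c_hom.GL_map_mat(1) in auto)
  finally show ?thesis using theta_eq A B by simp
qed

lemma theta_theta: assumes A: "A \<in> GL m" shows "th (th A) = A"
proof -
  have c: "A \<in> carrier_mat m m" using A GL_carrier by auto
  have P: "J_transpose (map_mat c A) \<in> GL m" using A J_transpose_GL c_hom.GL_map_mat(1) by blast
  have cc: "map_mat c (map_mat c A) = A" using c by (auto intro!: eq_matI)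
  have "th (th A) = minv (J_transpose (map_mat c (minv (J_transpose (map_mat c A)))))"
    using theta_eq[OF theta_GL[OF A]] theta_eq[OF A] by simp
  also have "map_mat c (minv (J_transpose (map_mat c A))) = minv (J_transpose A)"
    using c_hom.GL_map_mat(2)[OF P] J_transpose_map_c[of "map_mat c A"] c cc by simp
  also have "J_transpose (minv (J_transpose A)) = minv A"
    using minv_J_transpose[OF J_transpose_GL[OF A]] J_transpose_J_transpose[OF c] by simp
  finally show ?thesis using minv_minv[OF A] by simp
qed

lemma theta_one: "th (1\<^sub>m m) = 1\<^sub>m m"
  using theta_eq[OF GL_one] J_transpose_one minv_one c_hom.mat_hom_one by simp

lemma theta_minv: assumes A: "A \<in> GL m" shows "th (minv A) = minv (th A)"
proof -
  have "th A * th (minv A) = 1\<^sub>m m"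
    using theta_mult[OF A GL_minv_GL[OF A]] GL_minv[OF A] theta_one by simp
  from minv_eqI[OF _ _ this] show ?thesis
    using theta_GL A GL_minv_GL GL_carrier by metis
qed

lemma theta_pow: assumes A: "A \<in> GL m" shows "th (A ^\<^sub>m k) = (th A) ^\<^sub>m k"
proof (induction k)
  case 0 then show ?case using GL_carrier[OF A] GL_carrier[OF theta_GL[OF A]] theta_one by simp
next
  case (Suc k) then show ?case using theta_mult[OF GL_pow[OF A] A] by simp
qed

lemma theta_smult_one: assumes z: "z \<noteq> 0" shows "th (z \<cdot>\<^sub>m 1\<^sub>m m) = inverse (c z) \<cdot>\<^sub>m 1\<^sub>m m"
proof -
  have "map_mat c (z \<cdot>\<^sub>m 1\<^sub>m m) = c z \<cdot>\<^sub>m 1\<^sub>m m" by (rule eq_matI) (auto simp: hom_distribs)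
  moreover have "J_transpose (c z \<cdot>\<^sub>m 1\<^sub>m m) = c z \<cdot>\<^sub>m 1\<^sub>m m"
    using J_transpose_smult[of "1\<^sub>m m" "c z"] J_transpose_one by simp
  ultimately show ?thesis using theta_eq[OF GL_smult_one[OF z]] minv_smult_one[of "c z" m] z by simp
qed

lemma J_transpose_phi: "J_transpose phi = (-1) \<cdot>\<^sub>m phi"
proof (rule eq_matI)
  fix i k assume "i < dim_row ((-1) \<cdot>\<^sub>m phi)" "k < dim_col ((-1) \<cdot>\<^sub>m phi)"
  then have ik: "i < m" "k < m" by auto
  have k1: "(-1::'a) ^ (k - 1) * (-1) ^ k = -1" if "0 < k"
    using minus_one_power_square[of "k - 1"] that
    by (metis Suc_diff_1 mult.assoc mult_minus1_right power_Suc2)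
  show "J_transpose phi $$ (i, k) = ((-1) \<cdot>\<^sub>m phi) $$ (i, k)"
    using ik m_ge_2 minus_one_power_reflect[of 0] k1
    by (cases "k = 0") (auto simp: J_transpose_entry phi_entry Suc_mod_m)
qed auto

lemma theta_phi: "th phi = (-1) \<cdot>\<^sub>m psi"
proof -
  have "map_mat c phi = phi" by (rule eq_matI) (auto simp: phi1_def)
  then have "th phi = minv ((-1) \<cdot>\<^sub>m phi)" using theta_eq[OF phi_GL] J_transpose_phi by simp
  also have "\<dots> = (-1) \<cdot>\<^sub>m psi"
    by (rule minv_eqI[of _ m]) (use smult_mult_smult_mat[OF phi_carrier psi_carrier] phi_psi in auto)
  finally show ?thesis .
qed

lemma theta_psi: "th psi = (-1) \<cdot>\<^sub>m phi"
proof -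
  have "th psi = minv ((-1) \<cdot>\<^sub>m psi)" using theta_minv[OF phi_GL] minv_phi theta_phi by simp
  also have "\<dots> = (-1) \<cdot>\<^sub>m phi"
    by (rule minv_eqI[of _ m]) (use smult_mult_smult_mat[OF psi_carrier phi_carrier] psi_phi in auto)
  finally show ?thesis .
qed

lemma theta_phi_zpow: "th (phi_zpow t) = (-1) ^ nat \<bar>t\<bar> \<cdot>\<^sub>m phi_zpow (- t)"
proof (cases "0 \<le> t")
  case True
  then have "th (phi_zpow t) = (th phi) ^\<^sub>m nat t" using theta_pow[OF phi_GL] by (simp add: phi_zpow_nonneg)
  also have "\<dots> = (-1) ^ nat t \<cdot>\<^sub>m psi ^\<^sub>m nat t" unfolding theta_phi by (rule smult_pow_mat[OF psi_carrier])
  finally show ?thesis using True by (simp add: phi_zpow_nonpos)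
next
  case False
  then have "th (phi_zpow t) = (th psi) ^\<^sub>m nat (- t)" using theta_pow[OF psi_GL] by (simp add: phi_zpow_nonpos)
  also have "\<dots> = (-1) ^ nat (- t) \<cdot>\<^sub>m phi ^\<^sub>m nat (- t)" unfolding theta_psi by (rule smult_pow_mat[OF phi_carrier])
  finally show ?thesis using False by (simp add: phi_zpow_nonneg)
qed

lemma theta_in_iwahori_plus:
  assumes U: "in_iwahori_plus U"
  shows "in_iwahori_plus (th U)"
proof -
  have Uc: "U \<in> carrier_mat m m" using U by (simp add: in_iwahori_plus_def)
  have "map_mat c (U - 1\<^sub>m m) = map_mat c U - 1\<^sub>m m"
    using Uc by (auto intro!: eq_matI simp: hom_distribs)
  then have "in_iwahori_plus (map_mat c U)"
    using in_filt_map_c[of 1 "U - 1\<^sub>m m"] U Uc by (simp add: in_iwahori_plus_def)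
  then have "in_iwahori_plus (J_transpose (map_mat c U))"
    using in_filt_J_transpose[of 1 "map_mat c U - 1\<^sub>m m"] J_transpose_diff_one[of "map_mat c U"] Uc
    by (simp add: in_iwahori_plus_def)
  then obtain B where B: "in_iwahori_plus B" "J_transpose (map_mat c U) * B = 1\<^sub>m m"
    by (rule in_iwahori_plus_inverse)
  have "minv (J_transpose (map_mat c U)) = B"
    by (rule minv_eqI[OF _ _ B(2)]) (use B(1) in_iwahori_plus_carrier in auto)
  then show ?thesis using theta_eq[OF in_iwahori_plus_GL[OF U]] B(1) by simp
qed

section \<open>Twisted conjugacy classes meeting \<open>Z I\<^sup>+ \<langle>\<phi>\<^sub>1\<rangle>\<close>\<close>

lemma affine_generic_depth:
  assumes gen: "affine_generic v uf m x" and i: "i < m"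
  shows "depth_eq 1 i (Suc i mod m) ((x - 1\<^sub>m m) $$ (i, Suc i mod m))"
proof -
  have xI: "x \<in> Iwahori_plus v m" using gen by (simp add: affine_generic_def)
  have xc: "x \<in> carrier_mat m m" and vo: "\<forall>i<m. \<forall>j<m. vO v (x $$ (i, j))"
    and vp: "\<forall>i<m. \<forall>j<m. j < i \<longrightarrow> vP v (x $$ (i, j))"
    using xI by (auto simp: Iwahori_plus_def Iwahori_def)
  show ?thesis
  proof (cases "i = m - 1")
    case False
    then have s: "Suc i mod m = Suc i" "Suc i < m" using i Suc_mod_m by auto
    have "\<not> vP v (x $$ (i, i + 1))" using gen s by (simp add: affine_generic_def)
    moreover have "vO v (x $$ (i, Suc i))" using vo i s by auto
    ultimately have "x $$ (i, Suc i) \<noteq> 0" "v (x $$ (i, Suc i)) = 0" by (auto simp: vO_def vP_def)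
    then show ?thesis using s xc i by (simp add: depth_eq_def)
  next
    case True
    then have s: "Suc i mod m = 0" using i Suc_mod_m by auto
    have np: "\<not> vP v (x $$ (m - 1, 0) / uf)" using gen by (simp add: affine_generic_def)
    then have ne: "x $$ (m - 1, 0) \<noteq> 0" by (auto simp: vP_def)
    have "v (x $$ (m - 1, 0) / uf) = v (x $$ (m - 1, 0)) - 1"
      using v_mult[OF ne, of "inverse uf"] v_inverse[of uf] by (simp add: divide_inverse)
    moreover have "vP v (x $$ (m - 1, 0))" using vp m_ge_2 by auto
    ultimately have "v (x $$ (m - 1, 0)) = 1" using np ne by (auto simp: vP_def)
    then show ?thesis using s True xc i m_ge_2 ne by (simp add: depth_eq_def)
  qed
qed

lemma norm_twisted_conj:
  assumes y: "y \<in> GL m" and g: "g \<in> GL m"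
  shows "(y * g * minv (th y)) * th (y * g * minv (th y)) = y * Nmap c m g * minv y"
proof -
  have thy: "th y \<in> GL m" by (rule theta_GL[OF y])
  have "th (y * g * minv (th y)) = th y * th g * minv y"
    using theta_mult[OF GL_mult[OF y g] GL_minv_GL[OF thy]] theta_mult[OF y g]
      theta_minv[OF thy] theta_theta[OF y] by simp
  moreover have "(y * g * minv (th y)) * (th y * th g * minv y) = y * (g * th g) * minv y"
    by (rule mult_mat_cancel_mid)
      (use GL_carrier y g thy theta_GL GL_minv[OF thy] GL_minv[OF y] in auto)
  ultimately show ?thesis by (simp add: Nmap_def)
qed

text \<open>Writing \<open>h = z u \<phi>\<^sup>t\<close>, we get \<open>h \<theta>(h) = \<plusminus>z c(z)\<inverse> \<cdot> u (\<phi>\<^sup>t \<theta>(u) \<phi>\<^sup>-\<^sup>t)\<close>, since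
  \<open>\<theta>(\<phi>) = -\<phi>\<inverse>\<close>; the scalar is a unit because \<open>c\<close> preserves the valuation.\<close>

lemma norm_in_scalar_iwahori_plus:
  assumes "h \<in> setprod3 (scalars m) (Iwahori_plus v m) (cyclic_gen phi)"
  obtains eps W where "vunit v eps" "in_iwahori_plus W" "h * th h = eps \<cdot>\<^sub>m W"
proof -
  from assms obtain z u t where h: "h = (z \<cdot>\<^sub>m 1\<^sub>m m) * u * phi_zpow t" and z: "z \<noteq> 0"
    and u: "in_iwahori_plus u"
    unfolding setprod3_def scalars_def cyclic_gen_phi_iff by (auto intro: in_iwahori_plus_of_Iwahori_plus)
  define P Q s where "P = phi_zpow t" and "Q = phi_zpow (- t)" and "s = ((-1)::'a) ^ nat \<bar>t\<bar>"
  have c: "u \<in> carrier_mat m m" "th u \<in> carrier_mat m m" "P \<in> carrier_mat m m" "Q \<in> carrier_mat m m"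
    using u theta_in_iwahori_plus[OF u] by (auto simp: P_def Q_def in_iwahori_plus_def)
  have zu: "z \<cdot>\<^sub>m 1\<^sub>m m \<in> GL m" "u \<in> GL m"
    using GL_smult_one[OF z] in_iwahori_plus_GL[OF u] by auto
  have "th h = th (z \<cdot>\<^sub>m 1\<^sub>m m) * th u * th P"
    unfolding h P_def using zu phi_zpow_GL by (simp add: theta_mult GL_mult)
  also have "\<dots> = (inverse (c z) \<cdot>\<^sub>m 1\<^sub>m m) * th u * (s \<cdot>\<^sub>m Q)"
    using theta_smult_one[OF z] theta_phi_zpow[of t] by (simp add: P_def Q_def s_def)
  also have "\<dots> = (inverse (c z) * s) \<cdot>\<^sub>m (th u * Q)"
    using c by (simp add: smult_one_mult_mat smult_mult_smult_mat)
  finally have th_h: "th h = (inverse (c z) * s) \<cdot>\<^sub>m (th u * Q)" .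
  have hP: "h = z \<cdot>\<^sub>m (u * P)"
    unfolding h P_def[symmetric] using c by (simp add: smult_one_mult_mat mult_smult_assoc_mat[of _ m m _ m])
  define eps where "eps = z * (inverse (c z) * s)"
  have "h * th h = eps \<cdot>\<^sub>m (u * P * (th u * Q))"
    unfolding th_h unfolding hP eps_def
    using smult_mult_smult_mat[OF mult_carrier_mat[OF c(1,3)] mult_carrier_mat[OF c(2,4)]] .
  also have "u * P * (th u * Q) = u * (P * th u * Q)"
    using c by (simp add: assoc_mult_mat[of _ m m _ m _ m])
  finally have "h * th h = eps \<cdot>\<^sub>m (u * (P * th u * Q))" .
  moreover have "vunit v eps"
    using z v_mult v_inverse v_c by (auto simp: eps_def s_def vunit_def)
  moreover have "in_iwahori_plus (u * (P * th u * Q))"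
    using theta_in_iwahori_plus[OF u] in_filt_phi_zpow[of t] in_filt_phi_zpow[of "- t"] phi_zpow_inverse[of t]
    by (intro in_iwahori_plus_mult u in_iwahori_plus_conj) (auto simp: P_def Q_def)
  ultimately show thesis using that by blast
qed

lemma phi_zpow_normal_form:
  assumes y: "y \<in> GL m"
  obtains t M where "y = phi_zpow t * M" "in_filt 0 M" "\<not> in_filt 1 M"
proof -
  have yc: "y \<in> carrier_mat m m" by (rule GL_carrier[OF y])
  have "y \<noteq> 0\<^sub>m m m" using GL_minv(2)[OF y] GL_minv(1)[OF y] m_pos
    by (metis index_one_mat(1) index_mult_mat(1) left_mult_zero_mat zero_neq_one index_zero_mat(1))
  then obtain a i j where ij: "i < m" "j < m" "in_filt a y" "depth_eq a i j (y $$ (i, j))"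
    using exists_min_depth[OF yc] by blast
  define M where "M = phi_zpow (- a) * y"
  have "y = phi_zpow a * M"
    using phi_zpow_inverse[of a] yc by (simp add: M_def assoc_mult_mat[of _ m m _ m _ m, symmetric])
  moreover have "in_filt 0 M" using in_filt_mult[OF in_filt_phi_zpow[of "- a"] ij(3)] by (simp add: M_def)
  moreover have "\<not> in_filt 1 M"
  proof
    assume "in_filt 1 M"
    then have "in_filt (a + 1) y" using in_filt_mult[OF in_filt_phi_zpow] \<open>y = phi_zpow a * M\<close> by metis
    then show False using ij by (simp add: in_filt_entry depth_eq_iff)
  qed
  ultimately show thesis using that by blast
qed

lemma intertwiner_in_iwahori:
  assumes M: "in_filt 0 M" "\<not> in_filt 1 M" and gen: "affine_generic v uf m x"
    and eps: "vunit v eps" and W: "in_iwahori_plus W" and MxWM: "M * x = (eps \<cdot>\<^sub>m W) * M"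
  shows "in_iwahori M"
proof -
  obtain i0 where i0: "i0 < m" "depth_eq 0 i0 i0 (M $$ (i0, i0))" using exists_diag_depth_eq_zero[OF M] .
  define X Y where "X = x - 1\<^sub>m m" and "Y = eps \<cdot>\<^sub>m W - 1\<^sub>m m"
  have x: "in_iwahori_plus x" using gen by (simp add: affine_generic_def in_iwahori_plus_of_Iwahori_plus)
  then have X1: "in_filt 1 X" by (simp add: X_def in_iwahori_plus_def)
  have c: "M \<in> carrier_mat m m" "x \<in> carrier_mat m m" "W \<in> carrier_mat m m"
    using M x W in_filt_carrier in_iwahori_plus_carrier by auto
  have "M * X = M * x - M * 1\<^sub>m m" unfolding X_def by (rule mult_minus_distrib_mat) (use c in auto)
  also have "\<dots> = (eps \<cdot>\<^sub>m W) * M - 1\<^sub>m m * M" using MxWM c by simp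
  also have "\<dots> = Y * M" unfolding Y_def by (rule minus_mult_distrib_mat[symmetric]) (use c in auto)
  finally have MXY: "M * X = Y * M" .
  have "in_filt 0 Y"
    unfolding Y_def by (intro in_filt_diff in_filt_unit_smult eps in_iwahori_plus_in_filt W in_filt_one)
  from intertwine_diag_depth[OF M(1) i0(2) X1 this MXY i0(1)]
  have "in_iwahori_plus (eps \<cdot>\<^sub>m W)" by (rule unit_smult_in_iwahori_plus[OF eps W i0(1), folded Y_def])
  then have Y1: "in_filt 1 Y" by (simp add: Y_def in_iwahori_plus_def)
  show ?thesis
  proof (rule in_iwahori_of_diag_unit_succ[OF M(1) i0])
    fix i assume i: "i < m" and Mii: "depth_eq 0 i i (M $$ (i, i))"
    have "depth_eq 1 i (Suc i mod m) (X $$ (i, Suc i mod m))"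
      using affine_generic_depth[OF gen i] by (simp add: X_def)
    from intertwine_diag_unit[OF M(1) Mii X1 this Y1 MXY i]
    show "depth_eq 0 (Suc i mod m) (Suc i mod m) (M $$ (Suc i mod m, Suc i mod m))"
      using m_pos by simp
  qed
qed

lemma phi_zpow_mult_in_scalar_iwahori_phi:
  assumes M: "in_iwahori M"
  shows "phi_zpow t * M \<in> setprod3 (scalars m) (Iwahori v m) (cyclic_gen phi)"
proof -
  define b where "b = phi_zpow t * M * phi_zpow (- t)"
  have "b \<in> Iwahori v m"
    unfolding b_def using in_filt_phi_zpow phi_zpow_inverse
    by (intro Iwahori_of_in_iwahori in_iwahori_conj[OF M]) auto
  moreover have "phi_zpow t * M = 1\<^sub>m m * b * phi_zpow t"
  proof -
    have Mc: "M \<in> carrier_mat m m" using M in_filt_carrier by (auto simp: in_iwahori_def)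
    have "b * phi_zpow t = phi_zpow t * M * (phi_zpow (- t) * phi_zpow t)" unfolding b_def
      by (rule assoc_mult_mat[OF mult_carrier_mat[OF phi_zpow_carrier Mc] phi_zpow_carrier phi_zpow_carrier])
    moreover have "dim_row b = m" by (simp add: b_def)
    ultimately show ?thesis using phi_zpow_inverse[of "- t"] Mc by simp
  qed
  moreover have "1\<^sub>m m \<in> scalars m"
    unfolding scalars_def by (rule CollectI, rule exI[of _ 1]) (auto intro!: eq_matI)
  ultimately show ?thesis unfolding setprod3_def cyclic_gen_phi_iff by blast
qed

theorem twisted_conj_in_scalar_iwahori_phi:
  assumes g: "g \<in> Iwahori_plus v m"
    and gen: "affine_generic v uf m (Nmap c m g)"
    and y: "y \<in> GL m"
    and conj: "y * g * minv (th y) \<in> setprod3 (scalars m) (Iwahori_plus v m) (cyclic_gen phi)"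
  shows "y \<in> setprod3 (scalars m) (Iwahori v m) (cyclic_gen phi)"
proof -
  let ?x = "Nmap c m g"
  have gGL: "g \<in> GL m" using g by (intro in_iwahori_plus_GL in_iwahori_plus_of_Iwahori_plus)
  obtain eps W where eps: "vunit v eps" and W: "in_iwahori_plus W"
    and "y * ?x * minv y = eps \<cdot>\<^sub>m W"
    using norm_in_scalar_iwahori_plus[OF conj] norm_twisted_conj[OF y gGL] by metis
  moreover have xc: "?x \<in> carrier_mat m m" using gen by (simp add: affine_generic_def Iwahori_plus_def Iwahori_def)
  ultimately have yx: "y * ?x = (eps \<cdot>\<^sub>m W) * y"
    by (intro mult_minv_eq_imp_eq_mult[OF y] mult_carrier_mat[OF GL_carrier[OF y]])
  obtain t M where yM: "y = phi_zpow t * M" and M: "in_filt 0 M" "\<not> in_filt 1 M"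
    using phi_zpow_normal_form[OF y] .
  have "M * ?x = (phi_zpow (- t) * (eps \<cdot>\<^sub>m W) * phi_zpow t) * M"
    using yx yM M xc W phi_zpow_inverse[of "- t"]
    by (intro mult_mat_conj_intertwine[of _ m]) (auto simp: in_filt_def in_iwahori_plus_def)
  also have "phi_zpow (- t) * (eps \<cdot>\<^sub>m W) * phi_zpow t = eps \<cdot>\<^sub>m (phi_zpow (- t) * W * phi_zpow t)"
    using mult_smult_distrib[OF phi_zpow_carrier in_iwahori_plus_carrier[OF W]]
      mult_smult_assoc_mat[OF mult_carrier_mat[OF phi_zpow_carrier in_iwahori_plus_carrier[OF W]] phi_zpow_carrier]
    by simp
  finally have "in_iwahori M"
    using in_iwahori_plus_conj[OF W in_filt_phi_zpow in_filt_phi_zpow[of "- (- t)"]] phi_zpow_inverse[of "- t"]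
    by (intro intertwiner_in_iwahori[OF M gen eps]) auto
  then show ?thesis unfolding yM by (rule phi_zpow_mult_in_scalar_iwahori_phi)
qed

end

theorem lemma3p5:
  fixes v :: "'a::field_char_0 \<Rightarrow> int" and c :: "'a \<Rightarrow> 'a" and uf :: 'a
    and n :: nat and g y :: "'a mat"
  assumes hE: "unramified_quadratic_setup v c uf"
    and n_pos: "n \<ge> 1"
    and g: "g \<in> Iwahori_plus v (2 * n)"
    and gen: "affine_generic v uf (2 * n) (Nmap c (2 * n) g)"
    and y: "y \<in> GL (2 * n)"
    and conj: "y * g * minv (theta c (2 * n) y) \<in>
      setprod3 (scalars (2 * n)) (Iwahori_plus v (2 * n)) (cyclic_gen (phi1 uf (2 * n)))"
  shows "y \<in> setprod3 (scalars (2 * n)) (Iwahori v (2 * n)) (cyclic_gen (phi1 uf (2 * n)))"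
proof -
  interpret unramified_unitary v c uf "2 * n"
    by unfold_locales (use hE n_pos in auto)
  show ?thesis by (rule twisted_conj_in_scalar_iwahori_phi[OF g gen y conj])
qed

end
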